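(* Let $T$ be a tree with at least two vertices. Then $\dim(T)=\mathrm{bdim}(T)$ if and only if one of the following holds: - $T\in\{P_2,P_3\}$; or - for some integer $x\ge3$, $T$ is obtained from the star $K_{1,x}$ by subdividing at most $x-1$ of its edges, each exactly once (each subdivided edge is replaced by a path with two edges).
   Context: $d(x,y)$ denotes graph distance. A set $S\subseteq V(G)$ is a resolving set if for all distinct $x,y$ there is $z\in S$ with $d(x,z)\ne d(y,z)$. $\dim(G)$ is the minimum size of a resolving set. For an integer $k\ge1$ let $d_k(x,y)=\min\{d(x,y),k+1\}$. A function $f:V(G)\to\mathbb{Z}_{\ge 0}$ is a resolving broadcast of $G$ if for all distinct $x,y\in V(G)$ there is $z\in V(G)$ with $f(z)=i>0$ and $d_i(x,z)\ne d_i(y,z)$. The broadcast dimension $\mathrm{bdim}(G)$ is the minimum of $\sum_{v\in V(G)}f(v)$ over all resolving broadcasts $f$ of $G$. *)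

theory Defs
  imports Main
begin

type_synonym 'a graph = "'a set \<times> ('a \<Rightarrow> 'a \<Rightarrow> bool)"

definition verts :: "'a graph \<Rightarrow> 'a set" where "verts G = fst G"
definition adj :: "'a graph \<Rightarrow> 'a \<Rightarrow> 'a \<Rightarrow> bool" where "adj G = snd G"

definition simple_graph :: "'a graph \<Rightarrow> bool" where
  "simple_graph G \<longleftrightarrow> finite (verts G) \<and>
     (\<forall>x y. adj G x y \<longrightarrow> x \<in> verts G \<and> y \<in> verts G) \<and>
     (\<forall>x y. adj G x y \<longrightarrow> adj G y x) \<and> (\<forall>x. \<not> adj G x x)"

definition walk :: "'a graph \<Rightarrow> 'a list \<Rightarrow> bool" where
  "walk G xs \<longleftrightarrow> xs \<noteq> [] \<and> set xs \<subseteq> verts G \<and>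
     (\<forall>i. Suc i < length xs \<longrightarrow> adj G (xs ! i) (xs ! Suc i))"

definition connected_graph :: "'a graph \<Rightarrow> bool" where
  "connected_graph G \<longleftrightarrow> (\<forall>x\<in>verts G. \<forall>y\<in>verts G.
     \<exists>xs. walk G xs \<and> hd xs = x \<and> last xs = y)"

definition has_cycle :: "'a graph \<Rightarrow> bool" where
  "has_cycle G \<longleftrightarrow> (\<exists>xs. walk G xs \<and> distinct xs \<and> length xs \<ge> 3 \<and> adj G (last xs) (hd xs))"

definition tree :: "'a graph \<Rightarrow> bool" where
  "tree G \<longleftrightarrow> simple_graph G \<and> verts G \<noteq> {} \<and> connected_graph G \<and> \<not> has_cycle G"

definition gdist :: "'a graph \<Rightarrow> 'a \<Rightarrow> 'a \<Rightarrow> nat" where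
  "gdist G x y = (LEAST n. \<exists>xs. walk G xs \<and> hd xs = x \<and> last xs = y \<and> length xs = Suc n)"

definition resolving_set :: "'a graph \<Rightarrow> 'a set \<Rightarrow> bool" where
  "resolving_set G S \<longleftrightarrow> S \<subseteq> verts G \<and>
     (\<forall>x\<in>verts G. \<forall>y\<in>verts G. x \<noteq> y \<longrightarrow> (\<exists>z\<in>S. gdist G x z \<noteq> gdist G y z))"

definition metric_dim :: "'a graph \<Rightarrow> nat" where
  "metric_dim G = (LEAST n. \<exists>S. resolving_set G S \<and> card S = n)"

definition trunc_dist :: "'a graph \<Rightarrow> nat \<Rightarrow> 'a \<Rightarrow> 'a \<Rightarrow> nat" where
  "trunc_dist G k x y = min (gdist G x y) (k + 1)"

text \<open>Resolving broadcast; f is a function V(G) \<rightarrow> nat (values outside V(G) are irrelevant).\<close>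
definition resolving_broadcast :: "'a graph \<Rightarrow> ('a \<Rightarrow> nat) \<Rightarrow> bool" where
  "resolving_broadcast G f \<longleftrightarrow>
     (\<forall>x\<in>verts G. \<forall>y\<in>verts G. x \<noteq> y \<longrightarrow>
        (\<exists>z\<in>verts G. f z > 0 \<and> trunc_dist G (f z) x z \<noteq> trunc_dist G (f z) y z))"

definition broadcast_dim :: "'a graph \<Rightarrow> nat" where
  "broadcast_dim G = (LEAST n. \<exists>f. resolving_broadcast G f \<and> (\<Sum>v\<in>verts G. f v) = n)"

definition graph_iso :: "'a graph \<Rightarrow> 'b graph \<Rightarrow> bool" where
  "graph_iso G H \<longleftrightarrow> (\<exists>f. bij_betw f (verts G) (verts H) \<and>
     (\<forall>x\<in>verts G. \<forall>y\<in>verts G. adj G x y \<longleftrightarrow> adj H (f x) (f y)))"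

definition path_graph :: "nat \<Rightarrow> nat graph" where
  "path_graph n = ({0..<n}, \<lambda>i j. i < n \<and> j < n \<and> (j = Suc i \<or> i = Suc j))"

text \<open>The star K_{1,x} with centre (0,0) and leaves (1,i), i = 1..x, in which each edge
  to a leaf (1,i) with i \<in> S is subdivided exactly once by a new vertex (2,i).\<close>
definition subdivided_star :: "nat \<Rightarrow> nat set \<Rightarrow> (nat \<times> nat) graph" where
  "subdivided_star x S =
    ({(0,0)} \<union> {(1,i) | i. i \<in> {1..x}} \<union> {(2,i) | i. i \<in> S \<inter> {1..x}},
     \<lambda>u v. (\<exists>i\<in>{1..x}. (i \<notin> S \<and> ({u,v} = {(0,0),(1,i)}))
                       \<or> (i \<in> S \<and> ({u,v} = {(0,0),(2,i)} \<or> {u,v} = {(2,i),(1,i)}))))"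

end

theory Submission
  imports Defs
begin

text \<open>Write \<open>a(x,z) = min (d(x,z)) 2\<close>. A resolving broadcast of cost \<open>dim G\<close> can only use the
  value 1, because its support already resolves, and a broadcast of value 1 sees exactly \<open>a\<close>.
  Hence \<open>dim T = bdim T\<close> iff some minimum resolving set \<open>S\<close> is adjacency resolving. In a tree,
  \<open>R\<close> resolves iff at every vertex at most one branch misses \<open>R\<close>.

  If \<open>|S| = 1\<close>, the tree has at most three vertices. If \<open>|S| \<ge> 2\<close>, minimality gives for every
  \<open>t \<in> S\<close> a vertex with one branch meeting \<open>S\<close> only in \<open>t\<close> and another branch missing \<open>S\<close>. As
  vertices outside \<open>S\<close> are determined by their neighbours in \<open>S\<close>, the missing branch is a single
  pendant vertex \<open>z\<close>, all these vertices are the neighbour of \<open>z\<close>, and each other branch there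
  contains one element of \<open>S\<close> and at most two vertices: \<open>T\<close> is a subdivided star.

  Conversely, in a subdivided star with \<open>x\<close> legs the tops of all legs but one unsubdivided leg
  are adjacency resolving, while any resolving set meets all but one of the \<open>x\<close> branches at the
  centre.\<close>

section \<open>Adjacency resolving sets\<close>

definition nbrs :: "'a graph \<Rightarrow> 'a \<Rightarrow> 'a set" where
  "nbrs G v = {u. adj G v u}"

text \<open>The truncated distance \<open>d\<^sub>1\<close>, see \<open>trunc_dist_1\<close> below.\<close>

definition adj_dist :: "'a graph \<Rightarrow> 'a \<Rightarrow> 'a \<Rightarrow> nat" where
  "adj_dist G x z = (if x = z then 0 else if adj G x z then 1 else 2)"

definition adjacency_resolving :: "'a graph \<Rightarrow> 'a set \<Rightarrow> bool" where
  "adjacency_resolving G S \<longleftrightarrow> S \<subseteq> verts G \<and>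
     (\<forall>x\<in>verts G. \<forall>y\<in>verts G. x \<noteq> y \<longrightarrow> (\<exists>z\<in>S. adj_dist G x z \<noteq> adj_dist G y z))"

lemma graph_iso_if_bij_betw:
  assumes "bij_betw \<psi> (verts H) (verts G)"
    and "\<And>p q. p \<in> verts H \<Longrightarrow> q \<in> verts H \<Longrightarrow> adj H p q \<longleftrightarrow> adj G (\<psi> p) (\<psi> q)"
  shows "graph_iso G H"
proof -
  let ?\<phi> = "inv_into (verts H) \<psi>"
  have \<phi>: "bij_betw ?\<phi> (verts G) (verts H)"
    using bij_betw_inv_into[OF assms(1)] .
  have "adj G x y \<longleftrightarrow> adj H (?\<phi> x) (?\<phi> y)" if "x \<in> verts G" "y \<in> verts G" for x y
  proof -
    have "\<psi> (?\<phi> x) = x" "\<psi> (?\<phi> y) = y"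
      using that assms(1) by (auto simp: bij_betw_def f_inv_into_f)
    moreover have "?\<phi> x \<in> verts H" "?\<phi> y \<in> verts H"
      using \<phi> that by (auto simp: bij_betw_def)
    ultimately show ?thesis using assms(2) by metis
  qed
  thus ?thesis unfolding graph_iso_def using \<phi> by blast
qed

lemma adjacency_resolving_iso:
  assumes \<phi>: "bij_betw \<phi> (verts G) (verts H)"
    and adj: "\<forall>x\<in>verts G. \<forall>y\<in>verts G. adj G x y \<longleftrightarrow> adj H (\<phi> x) (\<phi> y)"
    and Q: "adjacency_resolving H Q"
  shows "adjacency_resolving G {v\<in>verts G. \<phi> v \<in> Q}" "card {v\<in>verts G. \<phi> v \<in> Q} = card Q"
proof -
  have QH: "Q \<subseteq> verts H" using Q by (simp add: adjacency_resolving_def)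
  have inj: "u = w \<longleftrightarrow> \<phi> u = \<phi> w" if "u \<in> verts G" "w \<in> verts G" for u w
    using \<phi> that unfolding bij_betw_def inj_on_def by blast
  have "bij_betw \<phi> {v\<in>verts G. \<phi> v \<in> Q} Q"
    using \<phi> QH unfolding bij_betw_def inj_on_def by auto
  thus "card {v\<in>verts G. \<phi> v \<in> Q} = card Q" by (rule bij_betw_same_card)
  show "adjacency_resolving G {v\<in>verts G. \<phi> v \<in> Q}"
    unfolding adjacency_resolving_def
  proof (intro conjI ballI impI)
    fix u w assume uw: "u \<in> verts G" "w \<in> verts G" "u \<noteq> w"
    have "\<phi> u \<in> verts H" "\<phi> w \<in> verts H" using \<phi> uw by (auto simp: bij_betw_def)
    then obtain r where r: "r \<in> Q" "adj_dist H (\<phi> u) r \<noteq> adj_dist H (\<phi> w) r"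
      using Q inj uw unfolding adjacency_resolving_def by metis
    have "r \<in> \<phi> ` verts G" using \<phi> r QH unfolding bij_betw_def by blast
    then obtain z where z: "z \<in> verts G" "\<phi> z = r" by blast
    have "adj_dist G v z = adj_dist H (\<phi> v) (\<phi> z)" if "v \<in> verts G" for v
      using that z adj inj unfolding adj_dist_def by simp
    hence "adj_dist G u z \<noteq> adj_dist G w z" using r z uw by simp
    thus "\<exists>z\<in>{v \<in> verts G. \<phi> v \<in> Q}. adj_dist G u z \<noteq> adj_dist G w z" using z r by blast
  qed auto
qed

lemma card_nbrs_iso:
  assumes \<phi>: "bij_betw \<phi> (verts G) (verts H)"
    and adj: "\<forall>x\<in>verts G. \<forall>y\<in>verts G. adj G x y \<longleftrightarrow> adj H (\<phi> x) (\<phi> y)"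
    and "\<And>x y. adj G x y \<Longrightarrow> y \<in> verts G" "\<And>p q. adj H p q \<Longrightarrow> q \<in> verts H"
    and "c \<in> verts G"
  shows "card (nbrs G c) = card (nbrs H (\<phi> c))"
proof -
  have "nbrs H (\<phi> c) = \<phi> ` nbrs G c"
  proof
    show "nbrs H (\<phi> c) \<subseteq> \<phi> ` nbrs G c"
    proof
      fix q assume "q \<in> nbrs H (\<phi> c)"
      moreover from this obtain u where "u \<in> verts G" "q = \<phi> u"
        using \<phi> assms(4) unfolding nbrs_def bij_betw_def by blast
      ultimately show "q \<in> \<phi> ` nbrs G c" using adj assms(5) unfolding nbrs_def by blast
    qed
    show "\<phi> ` nbrs G c \<subseteq> nbrs H (\<phi> c)"
      using adj assms(3,5) unfolding nbrs_def by blast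
  qed
  moreover have "inj_on \<phi> (nbrs G c)"
    using \<phi> assms(3) unfolding bij_betw_def nbrs_def by (auto intro: inj_on_subset)
  ultimately show ?thesis by (simp add: card_image)
qed

lemma doubleton_eq_iff_inj_on:
  assumes "inj_on f A" "p \<in> A" "q \<in> A" "r \<in> A" "s \<in> A"
  shows "{f p, f q} = {f r, f s} \<longleftrightarrow> {p, q} = {r, s}"
  using assms unfolding doubleton_eq_iff inj_on_def by metis

section \<open>Paths and subdivided stars\<close>

lemma path_graph_verts: "verts (path_graph n) = {0..<n}"
  by (simp add: path_graph_def verts_def)

lemma path_graph_adj: "adj (path_graph n) i j \<longleftrightarrow> i < n \<and> j < n \<and> (j = Suc i \<or> i = Suc j)"
  by (simp add: path_graph_def adj_def)

lemma adjacency_resolving_path_graph: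
  assumes "1 \<le> n" "n \<le> 3"
  shows "adjacency_resolving (path_graph n) {0}"
proof -
  have "adj_dist (path_graph n) p 0 = p" if "p < n" for p
    using that assms unfolding adj_dist_def path_graph_adj by auto
  thus ?thesis using assms unfolding adjacency_resolving_def path_graph_verts by auto
qed

lemma subdivided_star_verts:
  "verts (subdivided_star x S) = {(0,0)} \<union> {(1,i) | i. i \<in> {1..x}} \<union> {(2,i) | i. i \<in> S \<inter> {1..x}}"
  unfolding subdivided_star_def verts_def by simp

lemma subdivided_star_adj:
  "adj (subdivided_star x S) p q \<longleftrightarrow> (\<exists>i\<in>{1..x}.
     (i \<notin> S \<and> ((p = (0,0) \<and> q = (1,i)) \<or> (p = (1,i) \<and> q = (0,0)))) \<or>
     (i \<in> S \<and> ((p = (0,0) \<and> q = (2,i)) \<or> (p = (2,i) \<and> q = (0,0)) \<or>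
                (p = (2,i) \<and> q = (1,i)) \<or> (p = (1,i) \<and> q = (2,i)))))"
  unfolding subdivided_star_def adj_def by (simp add: doubleton_eq_iff)

lemma subdivided_star_adj_verts: "adj (subdivided_star x S) p q \<Longrightarrow> q \<in> verts (subdivided_star x S)"
  unfolding subdivided_star_adj subdivided_star_verts by auto

lemma subdivided_star_leg:
  assumes "p \<in> verts (subdivided_star x S)" "p \<noteq> (0,0)"
  shows "snd p \<in> {1..x} \<and> (p = (1, snd p) \<or> (p = (2, snd p) \<and> snd p \<in> S))"
  using assms unfolding subdivided_star_verts by auto

text \<open>The neighbour of the centre on the \<open>j\<close>-th leg.\<close>

definition star_top :: "nat set \<Rightarrow> nat \<Rightarrow> nat \<times> nat" where
  "star_top S j = (if j \<in> S then 2 else 1, j)"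

lemma star_top_in_verts: "j \<in> {1..x} \<Longrightarrow> star_top S j \<in> verts (subdivided_star x S)"
  unfolding subdivided_star_verts star_top_def by auto

lemma nbrs_star_centre: "nbrs (subdivided_star x S) (0,0) = star_top S ` {1..x}"
  unfolding nbrs_def subdivided_star_adj star_top_def by auto

lemma card_nbrs_star_centre: "card (nbrs (subdivided_star x S) (0,0)) = x"
proof -
  have "inj_on (star_top S) {1..x}" unfolding inj_on_def star_top_def by auto
  thus ?thesis by (simp add: nbrs_star_centre card_image)
qed

lemma adj_dist_star_top:
  assumes "p \<in> verts (subdivided_star x S)" "j \<in> {1..x}"
  shows "adj_dist (subdivided_star x S) p (star_top S j) =
    (if p = (0,0) then 1 else if snd p = j then (if p = star_top S j then 0 else 1) else 2)"
proof -
  consider "p = (0,0)" | i where "i \<in> {1..x}" "p = (1,i)"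
    | i where "i \<in> S" "i \<in> {1..x}" "p = (2,i)"
    using assms(1) unfolding subdivided_star_verts by blast
  thus ?thesis
    by cases (use assms(2) in \<open>auto simp: adj_dist_def star_top_def subdivided_star_adj\<close>)
qed

lemma subdivided_star_vert_cases:
  assumes "p \<in> verts (subdivided_star x S)"
  obtains "p = (0,0)" | i where "i \<in> {1..x}" "p = star_top S i"
    | i where "i \<in> S \<inter> {1..x}" "p = (1,i)"
proof -
  consider "p = (0,0)" | i where "i \<in> {1..x}" "p = (1,i)" | i where "i \<in> S \<inter> {1..x}" "p = (2,i)"
    using assms unfolding subdivided_star_verts by blast
  thus ?thesis
  proof cases
    case (2 i)
    show ?thesis
    proof (cases "i \<in> S")
      case True thus ?thesis using 2 that(3) by blast
    next
      case False thus ?thesis using 2 that(2)[of i] by (simp add: star_top_def)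
    qed
  next
    case (3 i) thus ?thesis using that(2)[of i] by (simp add: star_top_def)
  qed (use that(1) in blast)
qed

lemma subdivided_star_centre_in_verts: "(0,0) \<in> verts (subdivided_star x S)"
  by (simp add: subdivided_star_verts)

lemma subdivided_star_leg_in_verts: "i \<in> {1..x} \<Longrightarrow> (1,i) \<in> verts (subdivided_star x S)"
  by (simp add: subdivided_star_verts)

lemma subdivided_star_adj_top:
  "adj (subdivided_star x S) p q \<longleftrightarrow> (\<exists>i\<in>{1..x}. {p, q} = {(0,0), star_top S i}) \<or>
     (\<exists>i\<in>S \<inter> {1..x}. {p, q} = {star_top S i, (1,i)})"
  unfolding subdivided_star_def adj_def star_top_def by auto

text \<open>A vertex other than the centre is within distance 1 of the top of its own leg only,
  while the centre is adjacent to every top. The leg \<open>i0\<close> without a top in the set must be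
  unsubdivided, as all its vertices see every top at distance 2.\<close>

lemma star_tops_separate:
  assumes x3: "x \<ge> 3" and i0: "i0 \<in> {1..x}" "i0 \<notin> S"
    and pq: "p \<in> verts (subdivided_star x S)" "q \<in> verts (subdivided_star x S)"
      "p \<noteq> q" "p \<noteq> (0,0)"
  shows "\<exists>j\<in>{1..x} - {i0}. adj_dist (subdivided_star x S) p (star_top S j) \<noteq>
    adj_dist (subdivided_star x S) q (star_top S j)"
proof -
  let ?J = "{1..x} - {i0}"
  note dist_p = adj_dist_star_top[OF pq(1)] and dist_q = adj_dist_star_top[OF pq(2)]
  note np = subdivided_star_leg[OF pq(1) pq(4)]
  show ?thesis
  proof (cases "q = (0,0)")
    case True
    have "card (?J - {snd p}) \<ge> 1" using i0 x3 by (cases "snd p \<in> ?J") auto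
    hence "?J - {snd p} \<noteq> {}" by (metis card.empty not_one_le_zero)
    then obtain j where j: "j \<in> ?J" "j \<noteq> snd p" by blast
    thus ?thesis using dist_p dist_q True pq(4) by (intro bexI[of _ j]) auto
  next
    case False
    note nq = subdivided_star_leg[OF pq(2) False]
    show ?thesis
    proof (cases "snd p = snd q")
      case True
      have "snd p \<in> S" and "p = star_top S (snd p) \<or> q = star_top S (snd p)"
        using np nq True pq(3) unfolding star_top_def by (metis prod.collapse)+
      moreover have "snd p \<in> ?J" using \<open>snd p \<in> S\<close> i0 np by auto
      ultimately show ?thesis
        using dist_p dist_q True pq(3,4) False by (intro bexI[of _ "snd p"]) auto
    next
      case False
      show ?thesis
      proof (cases "snd p = i0")
        case True
        hence "snd q \<in> ?J" using nq False by auto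
        thus ?thesis using dist_p dist_q \<open>q \<noteq> (0,0)\<close> pq(4) False
          by (intro bexI[of _ "snd q"]) auto
      next
        case False
        hence "snd p \<in> ?J" using np by auto
        thus ?thesis using dist_p dist_q \<open>q \<noteq> (0,0)\<close> pq(4) \<open>snd p \<noteq> snd q\<close>
          by (intro bexI[of _ "snd p"]) auto
      qed
    qed
  qed
qed

lemma adjacency_resolving_subdivided_star:
  assumes "x \<ge> 3" "i0 \<in> {1..x}" "i0 \<notin> S"
  shows "adjacency_resolving (subdivided_star x S) (star_top S ` ({1..x} - {i0}))"
    and "card (star_top S ` ({1..x} - {i0})) = x - 1"
proof -
  have "inj_on (star_top S) ({1..x} - {i0})" unfolding inj_on_def star_top_def by auto
  thus "card (star_top S ` ({1..x} - {i0})) = x - 1" using assms(2) by (simp add: card_image)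
  show "adjacency_resolving (subdivided_star x S) (star_top S ` ({1..x} - {i0}))"
    unfolding adjacency_resolving_def
  proof (intro conjI ballI impI)
    fix p q assume pq: "p \<in> verts (subdivided_star x S)" "q \<in> verts (subdivided_star x S)" "p \<noteq> q"
    show "\<exists>r\<in>star_top S ` ({1..x} - {i0}). adj_dist (subdivided_star x S) p r \<noteq>
        adj_dist (subdivided_star x S) q r"
    proof (cases "p = (0,0)")
      case False thus ?thesis using star_tops_separate[OF assms pq False] by blast
    next
      case True
      hence "q \<noteq> (0,0)" using pq by simp
      thus ?thesis using star_tops_separate[OF assms pq(2,1)] pq by (metis image_eqI)
    qed
  qed (use star_top_in_verts in auto)
qed

locale star_shaped =
  fixes G :: "'a graph" and ce :: 'a and N P :: "'a set" and ch :: "'a \<Rightarrow> 'a"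
  assumes finite_N: "finite N"
    and ce_notin_N: "ce \<notin> N"
    and P_subset_N: "P \<subseteq> N"
    and inj_ch: "inj_on ch P"
    and ch_disjoint: "ch ` P \<inter> insert ce N = {}"
    and verts_eq: "verts G = insert ce (N \<union> ch ` P)"
    and adj_iff: "\<And>u v. adj G u v \<longleftrightarrow> (\<exists>a\<in>N. {u, v} = {ce, a}) \<or> (\<exists>a\<in>P. {u, v} = {a, ch a})"
begin

definition index :: "nat \<Rightarrow> 'a" where
  "index = (SOME h. bij_betw h {1..card N} N)"

abbreviation index_of :: "'a \<Rightarrow> nat" where
  "index_of \<equiv> inv_into {1..card N} index"

definition subdivided_legs :: "nat set" where
  "subdivided_legs = {i \<in> {1..card N}. index i \<in> P}"

abbreviation star :: "(nat \<times> nat) graph" where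
  "star \<equiv> subdivided_star (card N) subdivided_legs"

definition embed :: "nat \<times> nat \<Rightarrow> 'a" where
  "embed p = (if p = (0,0) then ce
     else if fst p = 1 \<and> index (snd p) \<in> P then ch (index (snd p)) else index (snd p))"

definition unembed :: "'a \<Rightarrow> nat \<times> nat" where
  "unembed v = (if v = ce then (0,0) else if v \<in> N then star_top subdivided_legs (index_of v)
     else (1, index_of (inv_into P ch v)))"

lemma bij_index: "bij_betw index {1..card N} N"
  unfolding index_def using ex_bij_betw_nat_finite_1[OF finite_N] by (rule someI_ex)

lemma index_of_index: "i \<in> {1..card N} \<Longrightarrow> index_of (index i) = i"
  using bij_index by (simp add: bij_betw_def)

lemma index_index_of:
  assumes "a \<in> N"
  shows "index (index_of a) = a" "index_of a \<in> {1..card N}"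
proof -
  have a: "a \<in> index ` {1..card N}" using bij_index assms by (simp add: bij_betw_def)
  show "index (index_of a) = a" using a by (rule f_inv_into_f)
  show "index_of a \<in> {1..card N}" using a by (rule inv_into_into)
qed

lemma subdivided_legs_iff: "i \<in> subdivided_legs \<longleftrightarrow> i \<in> {1..card N} \<and> index i \<in> P"
  by (simp add: subdivided_legs_def)

lemma index_in_N: "i \<in> {1..card N} \<Longrightarrow> index i \<in> N"
  using bij_index by (auto simp: bij_betw_def)

lemma P_eq: "P = index ` subdivided_legs"
proof
  show "index ` subdivided_legs \<subseteq> P" by (auto simp: subdivided_legs_def)
  show "P \<subseteq> index ` subdivided_legs"
  proof
    fix a assume "a \<in> P"
    hence "a = index (index_of a)" "index_of a \<in> subdivided_legs"
      using index_index_of[of a] P_subset_N subdivided_legs_iff by auto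
    thus "a \<in> index ` subdivided_legs" by (rule image_eqI)
  qed
qed

lemma embed_centre: "embed (0,0) = ce"
  by (simp add: embed_def)

lemma embed_top: "i \<in> {1..card N} \<Longrightarrow> embed (star_top subdivided_legs i) = index i"
  by (auto simp: embed_def star_top_def subdivided_legs_def)

lemma embed_pendant: "i \<in> subdivided_legs \<Longrightarrow> embed (1,i) = ch (index i)"
  by (auto simp: embed_def subdivided_legs_def)

lemma ch_index: "i \<in> subdivided_legs \<Longrightarrow> ch (index i) \<noteq> ce \<and> ch (index i) \<notin> N"
  using ch_disjoint subdivided_legs_iff by blast

lemma unembed_embed:
  assumes "p \<in> verts star"
  shows "unembed (embed p) = p"
  using assms
proof (cases rule: subdivided_star_vert_cases)
  case 1 thus ?thesis by (simp add: embed_centre unembed_def)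
next
  case (2 i) thus ?thesis
    using embed_top index_of_index index_in_N ce_notin_N by (auto simp: unembed_def)
next
  case (3 i)
  hence "i \<in> subdivided_legs" by (simp add: subdivided_legs_def)
  moreover have "inv_into P ch (ch (index i)) = index i"
    using inv_into_f_f[OF inj_ch] subdivided_legs_iff \<open>i \<in> subdivided_legs\<close> by blast
  ultimately show ?thesis
    using 3 embed_pendant index_of_index ch_index by (auto simp: unembed_def)
qed

lemma embed_unembed:
  assumes "v \<in> verts G"
  shows "embed (unembed v) = v"
proof -
  consider "v = ce" | "v \<in> N" | a where "a \<in> P" "v = ch a" using assms verts_eq by blast
  thus ?thesis
  proof cases
    case 1 thus ?thesis by (simp add: embed_centre unembed_def)
  next
    case 2 thus ?thesis using embed_top index_index_of ce_notin_N by (auto simp: unembed_def)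
  next
    case 3
    hence "v \<noteq> ce" "v \<notin> N" "index_of a \<in> subdivided_legs"
      using ch_disjoint index_index_of P_subset_N subdivided_legs_iff by auto
    thus ?thesis
      using 3 embed_pendant index_index_of P_subset_N inv_into_f_f[OF inj_ch]
      by (auto simp: unembed_def)
  qed
qed

lemma embed_in_verts:
  assumes "p \<in> verts star"
  shows "embed p \<in> verts G"
  using assms
proof (cases rule: subdivided_star_vert_cases)
  case (2 i) thus ?thesis using embed_top index_in_N by (simp add: verts_eq)
next
  case (3 i) thus ?thesis using embed_pendant subdivided_legs_iff by (simp add: verts_eq)
qed (simp add: embed_centre verts_eq)

lemma unembed_in_verts:
  assumes "v \<in> verts G"
  shows "unembed v \<in> verts star"
proof -
  consider "v = ce" | "v \<in> N" | a where "a \<in> P" "v = ch a" using assms verts_eq by blast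
  thus ?thesis
  proof cases
    case 1 thus ?thesis by (simp add: unembed_def subdivided_star_centre_in_verts)
  next
    case 2 thus ?thesis
      using index_index_of star_top_in_verts ce_notin_N by (auto simp: unembed_def)
  next
    case 3
    hence "unembed v = (1, index_of a)"
      using ch_disjoint inv_into_f_f[OF inj_ch] by (auto simp: unembed_def)
    thus ?thesis using index_index_of 3(1) P_subset_N subdivided_star_leg_in_verts by auto
  qed
qed

lemma bij_betw_embed: "bij_betw embed (verts star) (verts G)"
  by (rule bij_betw_byWitness[where f' = unembed])
    (use unembed_embed embed_unembed embed_in_verts unembed_in_verts in auto)

lemma adj_embed_iff:
  assumes "p \<in> verts star" "q \<in> verts star"
  shows "adj star p q \<longleftrightarrow> adj G (embed p) (embed q)"
proof -
  have inj: "inj_on embed (verts star)" using bij_betw_embed by (simp add: bij_betw_def)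
  have ex_N: "(\<exists>a\<in>N. Q a) \<longleftrightarrow> (\<exists>i\<in>{1..card N}. Q (index i))" for Q
  proof
    assume "\<exists>a\<in>N. Q a"
    then obtain a where "a \<in> N" "Q a" by blast
    thus "\<exists>i\<in>{1..card N}. Q (index i)"
      using index_index_of[of a] by (intro bexI[of _ "index_of a"]) simp_all
  qed (use index_in_N in blast)
  have ex_P: "(\<exists>a\<in>P. Q a) \<longleftrightarrow> (\<exists>i\<in>subdivided_legs. Q (index i))" for Q
  proof
    assume "\<exists>a\<in>P. Q a"
    then obtain a where "a \<in> P" "Q a" by blast
    thus "\<exists>i\<in>subdivided_legs. Q (index i)"
      using index_index_of[of a] P_subset_N subdivided_legs_iff
      by (intro bexI[of _ "index_of a"]) auto
  qed (use subdivided_legs_iff in blast)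
  have "adj G (embed p) (embed q) \<longleftrightarrow>
      (\<exists>i\<in>{1..card N}. {embed p, embed q} = {embed (0,0), embed (star_top subdivided_legs i)}) \<or>
      (\<exists>i\<in>subdivided_legs.
        {embed p, embed q} = {embed (star_top subdivided_legs i), embed (1,i)})"
    unfolding adj_iff ex_N ex_P using embed_top embed_pendant embed_centre subdivided_legs_iff
    by auto
  also have "\<dots> \<longleftrightarrow> adj star p q"
    unfolding subdivided_star_adj_top
    using doubleton_eq_iff_inj_on[OF inj assms] star_top_in_verts subdivided_star_centre_in_verts
      subdivided_star_leg_in_verts
    by (auto simp: subdivided_legs_def)
  finally show ?thesis by simp
qed

lemma graph_iso_subdivided_star:
  "\<exists>S. S \<subseteq> {1..card N} \<and> card S = card P \<and> graph_iso G (subdivided_star (card N) S)"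
proof (intro exI conjI)
  show "subdivided_legs \<subseteq> {1..card N}" by (auto simp: subdivided_legs_def)
  have "inj_on index subdivided_legs"
    using bij_index by (auto simp: bij_betw_def subdivided_legs_def intro: inj_on_subset)
  from card_image[OF this] show "card subdivided_legs = card P" unfolding P_eq[symmetric] by simp
  show "graph_iso G star" using bij_betw_embed adj_embed_iff by (rule graph_iso_if_bij_betw)
qed

end

section \<open>Distances and branches in trees\<close>

locale tree_graph =
  fixes G :: "'a graph"
  assumes tree: "tree G"
begin

abbreviation "V \<equiv> verts G"
abbreviation "d \<equiv> gdist G"

lemma finite_V: "finite V"
  using tree by (simp add: tree_def simple_graph_def)

lemma adj_in_V: "adj G x y \<Longrightarrow> x \<in> V \<and> y \<in> V"
  using tree by (simp add: tree_def simple_graph_def)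

lemma adj_sym: "adj G x y \<Longrightarrow> adj G y x"
  using tree by (simp add: tree_def simple_graph_def)

lemma adj_irrefl: "\<not> adj G x x"
  using tree by (simp add: tree_def simple_graph_def)

lemma nbrs_subset_V: "nbrs G c \<subseteq> V"
  using adj_in_V by (auto simp: nbrs_def)

lemma finite_nbrs: "finite (nbrs G c)"
  using finite_V nbrs_subset_V by (rule finite_subset[rotated])

lemma walk_iff_successively:
  "walk G xs \<longleftrightarrow> xs \<noteq> [] \<and> set xs \<subseteq> V \<and> successively (adj G) xs"
  by (simp add: walk_def successively_conv_nth)

lemma shortest_walk_ex:
  assumes "x \<in> V" "y \<in> V"
  shows "\<exists>xs. walk G xs \<and> hd xs = x \<and> last xs = y \<and> length xs = Suc (d x y)"
proof -
  obtain xs where xs: "walk G xs" "hd xs = x" "last xs = y"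
    using tree assms unfolding tree_def connected_graph_def by blast
  hence "\<exists>n. \<exists>xs. walk G xs \<and> hd xs = x \<and> last xs = y \<and> length xs = Suc n"
    by (intro exI[of _ "length xs - 1"] exI[of _ xs]) (auto simp: walk_def)
  thus ?thesis unfolding gdist_def by (rule LeastI_ex)
qed

lemma dist_le_walk:
  assumes "walk G xs" "hd xs = x" "last xs = y"
  shows "d x y \<le> length xs - 1"
  unfolding gdist_def
  by (rule Least_le) (use assms in \<open>auto simp: walk_def intro!: exI[of _ xs]\<close>)

lemma dist_self: "x \<in> V \<Longrightarrow> d x x = 0"
  using dist_le_walk[of "[x]" x x] by (simp add: walk_iff_successively)

lemma dist_eq_0D:
  assumes "x \<in> V" "y \<in> V" "d x y = 0"
  shows "x = y"
proof -
  obtain xs where "walk G xs" "hd xs = x" "last xs = y" "length xs = Suc 0"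
    using shortest_walk_ex[OF assms(1,2)] assms(3) by auto
  thus ?thesis by (cases xs) auto
qed

lemma dist_adj:
  assumes "adj G x y"
  shows "d x y = 1"
proof -
  have "d x y \<le> 1"
    using dist_le_walk[of "[x,y]" x y] assms adj_in_V by (simp add: walk_iff_successively)
  moreover have "d x y \<noteq> 0" using dist_eq_0D adj_in_V[OF assms] adj_irrefl assms by blast
  ultimately show ?thesis by simp
qed

lemma dist_eq_1D:
  assumes "x \<in> V" "y \<in> V" "d x y = 1"
  shows "adj G x y"
proof -
  obtain xs where xs: "walk G xs" "hd xs = x" "last xs = y" "length xs = 2"
    using shortest_walk_ex[OF assms(1,2)] assms(3) by auto
  then obtain a b where "xs = [a,b]" by (cases xs; cases "tl xs") auto
  thus ?thesis using xs by (auto simp: walk_iff_successively)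
qed

lemma walk_rev: "walk G xs \<Longrightarrow> walk G (rev xs)"
  by (auto simp: walk_iff_successively adj_sym elim: successively_mono)

lemma dist_sym:
  assumes "x \<in> V" "y \<in> V"
  shows "d x y = d y x"
proof -
  have le: "d b a \<le> d a b" if ab: "a \<in> V" "b \<in> V" for a b
  proof -
    obtain xs where xs: "walk G xs" "hd xs = a" "last xs = b" "length xs = Suc (d a b)"
      using shortest_walk_ex ab by blast
    have "d b a \<le> length (rev xs) - 1"
      by (rule dist_le_walk) (use xs walk_rev in \<open>auto simp: hd_rev last_rev walk_def\<close>)
    thus ?thesis using xs by simp
  qed
  show ?thesis using le[of x y] le[of y x] assms by simp
qed

lemma walk_append:
  assumes "walk G xs" "walk G ys" "last xs = hd ys"
  shows "walk G (xs @ tl ys)"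
proof -
  obtain y0 ys' where ys: "ys = y0 # ys'"
    using assms(2) by (cases ys) (auto simp: walk_iff_successively)
  have "successively (adj G) (xs @ ys')"
    using assms ys by (cases ys') (auto simp: walk_iff_successively successively_append_iff)
  thus ?thesis using assms ys by (auto simp: walk_iff_successively)
qed

lemma dist_triangle:
  assumes "x \<in> V" "y \<in> V" "z \<in> V"
  shows "d x z \<le> d x y + d y z"
proof -
  obtain xs where xs: "walk G xs" "hd xs = x" "last xs = y" "length xs = Suc (d x y)"
    using shortest_walk_ex assms by blast
  obtain ys where ys: "walk G ys" "hd ys = y" "last ys = z" "length ys = Suc (d y z)"
    using shortest_walk_ex assms by blast
  have w: "walk G (xs @ tl ys)" using walk_append xs ys by auto
  have "hd (xs @ tl ys) = x" using xs by (auto simp: walk_iff_successively)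
  moreover have "last (xs @ tl ys) = z" using xs ys
    by (cases ys; cases "tl ys") (auto simp: walk_iff_successively)
  ultimately have "d x z \<le> length (xs @ tl ys) - 1" using dist_le_walk w by blast
  thus ?thesis using xs ys by simp
qed

lemma dist_le_Suc_nbr:
  assumes "adj G x u" "z \<in> V"
  shows "d x z \<le> Suc (d u z)"
  using dist_triangle[of x u z] adj_in_V[OF assms(1)] dist_adj[OF assms(1)] assms(2) by simp

lemma step_towards:
  assumes "x \<in> V" "y \<in> V" "x \<noteq> y"
  shows "\<exists>u. adj G x u \<and> Suc (d u y) = d x y"
proof -
  obtain xs where xs: "walk G xs" "hd xs = x" "last xs = y" "length xs = Suc (d x y)"
    using shortest_walk_ex assms by blast
  then obtain u rest where r: "xs = x # u # rest"
    using assms(3) by (cases xs; cases "tl xs") (auto simp: walk_iff_successively)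
  have a: "adj G x u" using xs r by (simp add: walk_iff_successively)
  have "walk G (u # rest)" using xs r by (auto simp: walk_iff_successively)
  moreover have "last (u#rest) = y" using xs r by simp
  ultimately have "d u y \<le> length (u#rest) - 1" using dist_le_walk by (metis list.sel(1))
  hence "Suc (d u y) \<le> d x y" using xs r by simp
  moreover have "d x y \<le> Suc (d u y)" using dist_le_Suc_nbr a assms by blast
  ultimately show ?thesis using a by auto
qed

lemma dist_lt_on_shortest_walk:
  assumes "walk G xs" "hd xs = p" "last xs = y" "length xs = Suc (d p y)"
    "v \<in> set xs" "v \<noteq> p"
  shows "d v y < d p y"
proof -
  obtain A B where AB: "xs = A @ v # B" using split_list[OF assms(5)] by blast
  have "A \<noteq> []" using AB assms by auto
  have w: "walk G (v # B)"
    using assms(1) AB by (auto simp: walk_iff_successively successively_append_iff)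
  have "last (v # B) = y" using assms(3) AB by simp
  hence "d v y \<le> length B" using dist_le_walk[OF w] by simp
  moreover have "length A + length B = d p y" using AB assms(4) by simp
  moreover have "length A > 0" using \<open>A \<noteq> []\<close> by simp
  ultimately show ?thesis by linarith
qed

lemma shortest_walk_distinct:
  assumes "walk G xs" "hd xs = p" "last xs = y" "length xs = Suc (d p y)"
  shows "distinct xs"
proof (rule ccontr)
  assume "\<not> distinct xs"
  then obtain as v bs cs where dec: "xs = as @ [v] @ bs @ [v] @ cs"
    using not_distinct_decomp by blast
  have "successively (adj G) ((as @ [v]) @ (bs @ [v] @ cs))"
    "successively (adj G) ((as @ [v] @ bs) @ (v # cs))"
    using assms(1) dec by (simp_all add: walk_iff_successively)
  hence "successively (adj G) (as @ [v])" "successively (adj G) (v # cs)"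
    by (simp_all only: successively_append_iff)
  hence "walk G (as @ [v])" "walk G (v # cs)"
    using assms(1) dec by (auto simp: walk_iff_successively)
  hence w: "walk G (as @ [v] @ cs)" using walk_append by fastforce
  have "hd (as @ [v] @ cs) = p" using assms(2) dec by (cases as) auto
  moreover have "last (as @ [v] @ cs) = y" using assms(3) dec by (cases cs) auto
  ultimately have "d p y \<le> length (as @ [v] @ cs) - 1" using dist_le_walk[OF w] by blast
  thus False using assms(4) dec by simp
qed

text \<open>Following \<open>P\<close> up to its first vertex on \<open>Q\<close> and returning along \<open>Q\<close> closes a cycle.\<close>

lemma no_converging_paths:
  assumes "walk G P" "walk G Q" "distinct P" "distinct Q" "last P = last Q"
    "adj G (hd P) (hd Q)" "hd P \<notin> set Q" "hd Q \<notin> set P"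
  shows False
proof -
  have "\<exists>m\<in>set P. m \<in> set Q" using assms(1,2,5) by (metis last_in_set walk_def)
  then obtain A m B where P: "P = A @ m # B" "m \<in> set Q" "\<forall>z\<in>set A. z \<notin> set Q"
    using split_list_first_prop[of P "\<lambda>z. z \<in> set Q"] by blast
  obtain C D where Q: "Q = C @ m # D" using split_list[OF P(2)] by blast
  have An: "A \<noteq> []" using P assms(7) by auto
  have Cn: "C \<noteq> []" using Q P assms(8) by auto
  let ?L = "A @ m # rev C"
  have s1: "successively (adj G) (A @ [m])" using assms(1) P(1)
    by (auto simp: walk_iff_successively successively_append_iff)
  have s2: "successively (adj G) (C @ [m])" using assms(2) Q
    by (auto simp: walk_iff_successively successively_append_iff)
  have s2': "successively (adj G) (m # rev C)"
  proof -
    have "successively (\<lambda>x y. adj G y x) (C @ [m])"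
      using s2 by (auto elim: successively_mono simp: adj_sym)
    hence "successively (adj G) (rev (C @ [m]))" by (simp only: successively_rev)
    thus ?thesis by simp
  qed
  have "successively (adj G) ?L" using s1 s2' An
    by (auto simp: successively_append_iff)
  moreover have "set ?L \<subseteq> V" using assms(1,2) P Q by (auto simp: walk_iff_successively)
  ultimately have w: "walk G ?L" by (simp add: walk_iff_successively)
  have "distinct ?L" using assms(3,4) P Q by auto
  moreover have "length ?L \<ge> 3" using An Cn by (cases A; cases C) auto
  moreover have "adj G (last ?L) (hd ?L)"
  proof -
    have "last ?L = hd Q" using Cn Q by (simp add: last_rev)
    moreover have "hd ?L = hd P" using An P by simp
    ultimately show ?thesis using assms(6) adj_sym by simp
  qed
  ultimately have "has_cycle G" using w unfolding has_cycle_def by blast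
  thus False using tree by (simp add: tree_def)
qed

lemma dist_adj_neq:
  assumes "adj G c a" "y \<in> V"
  shows "d c y \<noteq> d a y"
proof
  assume eq: "d c y = d a y"
  have cV: "c \<in> V" and aV: "a \<in> V" using adj_in_V assms by auto
  obtain P where P: "walk G P" "hd P = c" "last P = y" "length P = Suc (d c y)"
    using shortest_walk_ex cV assms by blast
  obtain Q where Q: "walk G Q" "hd Q = a" "last Q = y" "length Q = Suc (d a y)"
    using shortest_walk_ex aV assms by blast
  have "a \<notin> set P" using dist_lt_on_shortest_walk[OF P, of a] eq assms(1) adj_irrefl by auto
  moreover have "c \<notin> set Q"
    using dist_lt_on_shortest_walk[OF Q, of c] eq assms(1) adj_irrefl by auto
  ultimately show False
    using no_converging_paths[OF P(1) Q(1) shortest_walk_distinct[OF P] shortest_walk_distinct[OF Q]]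
      P Q assms(1)
    by auto
qed

lemma dist_adj_cases:
  assumes "adj G c a" "y \<in> V"
  shows "d a y = Suc (d c y) \<or> d c y = Suc (d a y)"
  using dist_adj_neq[OF assms] dist_le_Suc_nbr[OF assms]
    dist_le_Suc_nbr[OF adj_sym[OF assms(1)] assms(2)]
  by linarith

lemma no_two_nbrs_closer:
  assumes "adj G c a" "adj G c b" "a \<noteq> b" "y \<in> V" "d a y < d c y" "d b y < d c y"
  shows False
proof -
  have cV: "c \<in> V" and aV: "a \<in> V" and bV: "b \<in> V" using adj_in_V assms by auto
  have ea: "d c y = Suc (d a y)" and eb: "d c y = Suc (d b y)"
    using dist_adj_cases assms by fastforce+
  obtain P where P: "walk G P" "hd P = a" "last P = y" "length P = Suc (d a y)"
    using shortest_walk_ex aV assms by blast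
  obtain Q where Q: "walk G Q" "hd Q = b" "last Q = y" "length Q = Suc (d b y)"
    using shortest_walk_ex bV assms by blast
  have cQ: "c \<notin> set Q" using dist_lt_on_shortest_walk[OF Q, of c] eb assms(2) adj_irrefl by auto
  have aQ: "a \<notin> set Q" using dist_lt_on_shortest_walk[OF Q, of a] ea eb assms(3) by auto
  have cP: "c \<notin> set P" using dist_lt_on_shortest_walk[OF P, of c] ea assms(1) adj_irrefl by auto
  have wQ: "walk G (c # Q)" using Q assms(2) cV by (cases Q) (auto simp: walk_iff_successively)
  have "distinct (c # Q)" using cQ shortest_walk_distinct[OF Q] by simp
  moreover have "a \<notin> set (c # Q)" using aQ assms(1) adj_irrefl by auto
  moreover have "last (c # Q) = y" using Q by (cases Q) (auto simp: walk_iff_successively)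
  ultimately show False
    using no_converging_paths[OF P(1) wQ shortest_walk_distinct[OF P]] P Q cP adj_sym[OF assms(1)]
    by auto
qed

text \<open>For a neighbour \<open>a\<close> of \<open>c\<close>, \<open>branch c a\<close> is the vertex set of the component of
  \<open>G - c\<close> containing \<open>a\<close>.\<close>

definition branch :: "'a \<Rightarrow> 'a \<Rightarrow> 'a set" where
  "branch c a = {y \<in> V. d a y < d c y}"

lemma branch_in_V: "y \<in> branch c a \<Longrightarrow> y \<in> V" by (simp add: branch_def)

lemma root_notin_branch: "c \<in> V \<Longrightarrow> c \<notin> branch c a" by (simp add: branch_def dist_self)

lemma nbr_in_branch: "adj G c a \<Longrightarrow> a \<in> branch c a"
  using adj_in_V[of c a] dist_self[of a] dist_adj[of c a] by (simp add: branch_def)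

lemma branches_disjoint: "adj G c a \<Longrightarrow> adj G c b \<Longrightarrow> a \<noteq> b \<Longrightarrow> y \<in> branch c a \<Longrightarrow> y \<notin> branch c b"
  using no_two_nbrs_closer by (auto simp: branch_def)

lemma in_some_branch:
  assumes "c \<in> V" "y \<in> V" "y \<noteq> c"
  shows "\<exists>a. adj G c a \<and> y \<in> branch c a"
proof -
  obtain u where "adj G c u" "Suc (d u y) = d c y" using step_towards assms by metis
  thus ?thesis using assms by (auto simp: branch_def)
qed

lemma dist_root_branch: "adj G c a \<Longrightarrow> y \<in> branch c a \<Longrightarrow> d c y = Suc (d a y)"
  using dist_adj_cases by (fastforce simp: branch_def)

lemma dist_nbr_outside_branch: "adj G c a \<Longrightarrow> y \<in> V \<Longrightarrow> y \<notin> branch c a \<Longrightarrow> d a y = Suc (d c y)"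
  using dist_adj_cases by (fastforce simp: branch_def)

lemma branch_nbr:
  assumes "adj G c a" "y \<in> branch c a" "adj G y y'"
  shows "y' \<in> branch c a \<or> (y = a \<and> y' = c)"
proof (cases "y' \<in> branch c a")
  case True thus ?thesis ..
next
  case out: False
  have yV: "y \<in> V" and y'V: "y' \<in> V" using adj_in_V assms(3) by auto
  have cV: "c \<in> V" and aV: "a \<in> V" using adj_in_V assms(1) by auto
  have e1: "d c y = Suc (d a y)" using dist_root_branch assms by blast
  have e2: "d a y' = Suc (d c y')" using dist_nbr_outside_branch assms(1) y'V out by blast
  have k1: "d y' c = Suc (d y c) \<or> d y c = Suc (d y' c)" by (rule dist_adj_cases[OF assms(3) cV])
  have k2: "d y' a = Suc (d y a) \<or> d y a = Suc (d y' a)" by (rule dist_adj_cases[OF assms(3) aV])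
  have q: "d c y = d y c" "d c y' = d y' c" "d a y = d y a" "d a y' = d y' a"
    using dist_sym cV aV yV y'V by blast+
  have A: "d c y = Suc (d c y')" using k1 k2 e1 e2 q by (elim disjE; linarith)
  have B: "d a y' = Suc (d a y)" using k1 k2 e1 e2 q by (elim disjE; linarith)
  show ?thesis
  proof (cases "y = a")
    case True
    then have "d c y' = 0" using A dist_adj[OF assms(1)] by simp
    hence "y' = c" using dist_eq_0D cV y'V by metis
    thus ?thesis using True by simp
  next
    case False
    then obtain u where u: "adj G y u" "Suc (d u a) = d y a"
      using step_towards[OF yV aV False] by metis
    have uV: "u \<in> V" using adj_in_V u by auto
    have "d c u \<le> d c a + d a u" using dist_triangle cV aV uV by blast
    hence "d c u < d c y"
      using u e1 dist_adj[OF assms(1)] dist_sym[OF aV yV] dist_sym[OF aV uV] by simp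
    hence lt1: "d u c < d y c" using dist_sym[OF cV yV] dist_sym[OF cV uV] by simp
    have lt2: "d y' c < d y c" using A dist_sym[OF cV yV] dist_sym[OF cV y'V] by simp
    have "u = y'"
    proof (rule ccontr)
      assume "u \<noteq> y'"
      thus False using no_two_nbrs_closer[OF u(1) assms(3) _ cV lt1 lt2] by simp
    qed
    hence "d a y' < d a y" using u dist_sym[OF aV yV] dist_sym[OF aV uV] by simp
    thus ?thesis using B by simp
  qed
qed

lemma dist_via_root:
  assumes "adj G c a" "z \<in> branch c a"
  shows "w \<in> V \<Longrightarrow> w \<notin> branch c a \<Longrightarrow> d w z = d w c + d c z"
proof (induction "d w z" arbitrary: w rule: less_induct)
  case less
  have cV: "c \<in> V" using adj_in_V assms by auto
  have zV: "z \<in> V" using assms branch_in_V by auto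
  show ?case
  proof (cases "w = c")
    case True thus ?thesis using dist_self[OF cV] by simp
  next
    case False
    have wz: "w \<noteq> z" using less.prems assms by auto
    obtain w' where w': "adj G w w'" "Suc (d w' z) = d w z"
      using step_towards[OF less.prems(1) zV wz] by blast
    have w'V: "w' \<in> V" using adj_in_V w' by auto
    have nb: "w' \<notin> branch c a"
    proof
      assume "w' \<in> branch c a"
      hence "w' = a \<and> w = c" using branch_nbr[OF assms(1) _ adj_sym[OF w'(1)]] less.prems by blast
      thus False using False by simp
    qed
    have lt: "d w' z < d w z" using w'(2) by simp
    have ih: "d w' z = d w' c + d c z" using less.hyps[OF lt w'V nb] .
    have st: "d w c \<le> Suc (d w' c)" using dist_le_Suc_nbr[OF w'(1) cV] .
    have tr: "d w z \<le> d w c + d c z" using dist_triangle[OF less.prems(1) cV zV] .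
    show ?thesis using ih st tr w'(2) by linarith
  qed
qed

lemma dist_parity:
  assumes "u \<in> V" "w \<in> V" "z \<in> V"
  shows "even (d u z + d w z + d u w)"
  using assms(1)
proof (induction "d u w" arbitrary: u rule: less_induct)
  case less
  show ?case
  proof (cases "u = w")
    case True thus ?thesis using dist_self less by simp
  next
    case False
    then obtain u' where u': "adj G u u'" "Suc (d u' w) = d u w"
      using step_towards less assms by metis
    have IH: "even (d u' z + d w z + d u' w)" using less.hyps[of u'] u' adj_in_V by simp
    have "d u z = Suc (d u' z) \<or> d u' z = Suc (d u z)"
      using dist_adj_cases[OF u'(1) assms(3)] by auto
    hence "d u z + d w z + d u w = (d u' z + d w z + d u' w) + 2 \<or>
        d u z + d w z + d u w = d u' z + d w z + d u' w"
      using u'(2) by linarith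
    thus ?thesis using IH by (metis dvd_add dvd_refl)
  qed
qed

lemma point_between:
  assumes "u \<in> V" "w \<in> V"
  shows "j \<le> d u w \<Longrightarrow> \<exists>c\<in>V. d u c = j \<and> d c w = d u w - j"
proof (induction j)
  case 0 thus ?case using assms dist_self by auto
next
  case (Suc j)
  then obtain c where c: "c \<in> V" "d u c = j" "d c w = d u w - j" by auto
  have "c \<noteq> w" using c Suc.prems dist_self assms by auto
  then obtain c' where c': "adj G c c'" "Suc (d c' w) = d c w" using step_towards c assms by metis
  have c'V: "c' \<in> V" using adj_in_V c' by auto
  have "d u c' \<le> Suc j" using dist_triangle[of u c c'] dist_adj[OF c'(1)] c assms c'V by simp
  moreover have "d u w \<le> d u c' + d c' w" using dist_triangle assms c'V by blast
  ultimately show ?case using c c' c'V Suc.prems by (intro bexI[of _ c']) auto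
qed

lemma dist_lt_within_branch:
  assumes "adj G c a" "adj G c b" "a \<noteq> b" "u \<in> branch c a" "w \<in> branch c b"
    and "d u c = d w c" "z \<in> branch c a"
  shows "d u z < d w z"
proof -
  have V: "a \<in> V" "c \<in> V" "u \<in> V" "w \<in> V" "z \<in> V"
    using adj_in_V assms(1) branch_in_V assms(4,5,7) by auto
  have "w \<notin> branch c a" using branches_disjoint[OF assms(2,1)] assms(3,5) by blast
  hence "d w z = d w c + d c z" using dist_via_root[OF assms(1,7)] V(4) by blast
  moreover have "d u z \<le> d u a + d a z" using dist_triangle V by blast
  moreover have "d c z = Suc (d a z)" "d c u = Suc (d a u)"
    using dist_root_branch assms(1,4,7) by blast+
  moreover have "d u c = d c u" "d u a = d a u" using dist_sym V by blast+
  ultimately show ?thesis using assms(6) by linarith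
qed

text \<open>If \<open>u \<noteq> w\<close> are not resolved by \<open>R\<close>, then parity forces \<open>d u w = 2h\<close>, and the two
  branches at the midpoint of \<open>u\<close> and \<open>w\<close> that contain \<open>u\<close> and \<open>w\<close> both miss \<open>R\<close>.\<close>

lemma resolving_if_branches_hit:
  assumes "R \<subseteq> V" "R \<noteq> {}"
    and hit: "\<And>c a b. adj G c a \<Longrightarrow> adj G c b \<Longrightarrow> a \<noteq> b \<Longrightarrow>
      branch c a \<inter> R \<noteq> {} \<or> branch c b \<inter> R \<noteq> {}"
  shows "resolving_set G R"
  unfolding resolving_set_def
proof (intro conjI assms(1) ballI impI)
  fix u w assume uV: "u \<in> V" and wV: "w \<in> V" and "u \<noteq> w"
  show "\<exists>z\<in>R. d u z \<noteq> d w z"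
  proof (rule ccontr)
    assume "\<not> ?thesis"
    hence eq: "d u z = d w z" if "z \<in> R" for z using that by blast
    obtain z0 where "z0 \<in> R" using assms(2) by blast
    hence "even (d u w)" using dist_parity[OF uV wV, of z0] eq assms(1) by auto
    then obtain h where h: "d u w = 2 * h" by blast
    have "h \<noteq> 0" using h dist_eq_0D[OF uV wV] \<open>u \<noteq> w\<close> by auto
    obtain c where c: "c \<in> V" "d u c = h" "d c w = h"
      using point_between[OF uV wV, of h] h by auto
    have "c \<noteq> u" "c \<noteq> w" using c \<open>h \<noteq> 0\<close> dist_self uV wV by auto
    then obtain a b where a: "adj G c a" "Suc (d a u) = d c u"
      and b: "adj G c b" "Suc (d b w) = d c w"
      using step_towards c(1) uV wV by metis
    have V: "a \<in> V" "b \<in> V" using adj_in_V a b by auto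
    have ua: "u \<in> branch c a" and wb: "w \<in> branch c b"
      using a b uV wV by (simp_all add: branch_def)
    have dc: "d u c = h" "d w c = h" "d c u = h" using c dist_sym uV wV by auto
    have "a \<noteq> b"
    proof
      assume "a = b"
      hence "d u w \<le> d u a + d a w" using dist_triangle uV V wV by blast
      also have "\<dots> = (h - 1) + (h - 1)" using a b \<open>a = b\<close> dc c dist_sym uV V by simp
      finally show False using h \<open>h \<noteq> 0\<close> by simp
    qed
    have "branch c a \<inter> R = {}"
      using dist_lt_within_branch[OF a(1) b(1) \<open>a \<noteq> b\<close> ua wb] dc eq by fastforce
    moreover have "branch c b \<inter> R = {}"
      using dist_lt_within_branch[OF b(1) a(1) _ wb ua] \<open>a \<noteq> b\<close> dc eq by fastforce
    ultimately show False using hit[OF a(1) b(1) \<open>a \<noteq> b\<close>] by simp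
  qed
qed

lemma branches_hit_if_resolving:
  assumes "resolving_set G R" "adj G c a" "adj G c b" "a \<noteq> b"
  shows "branch c a \<inter> R \<noteq> {} \<or> branch c b \<inter> R \<noteq> {}"
proof (rule ccontr)
  assume "\<not> ?thesis"
  hence miss: "z \<notin> branch c a" "z \<notin> branch c b" if "z \<in> R" for z
    using that by auto
  have "R \<subseteq> V" using assms(1) by (simp add: resolving_set_def)
  hence "d a z = d b z" if "z \<in> R" for z
    using dist_nbr_outside_branch[OF assms(2), of z] dist_nbr_outside_branch[OF assms(3), of z]
      that miss by auto
  moreover have "a \<in> V" "b \<in> V" using adj_in_V assms(2,3) by auto
  then obtain z where "z \<in> R" "d a z \<noteq> d b z"
    using assms(1,4) unfolding resolving_set_def by blast
  ultimately show False by blast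
qed

text \<open>A resolving set meets all branches at \<open>c\<close> but one, and these are disjoint.\<close>

lemma card_nbrs_le_resolving:
  assumes R: "resolving_set G R"
  shows "card (nbrs G c) \<le> card R + 1"
proof -
  have finR: "finite R"
    using R finite_V by (auto simp: resolving_set_def intro: finite_subset)
  define H where "H = {a \<in> nbrs G c. branch c a \<inter> R \<noteq> {}}"
  define r where "r a = (SOME z. z \<in> branch c a \<inter> R)" for a
  have r: "r a \<in> branch c a \<inter> R" if "a \<in> H" for a
  proof -
    have "\<exists>z. z \<in> branch c a \<inter> R" using that by (auto simp: H_def)
    thus ?thesis unfolding r_def by (rule someI_ex)
  qed
  have "inj_on r H"
  proof (rule inj_onI, rule ccontr)
    fix a1 a2 assume a: "a1 \<in> H" "a2 \<in> H" "r a1 = r a2" "a1 \<noteq> a2"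
    hence "adj G c a1" "adj G c a2" by (simp_all add: H_def nbrs_def)
    thus False using branches_disjoint r a by (metis IntD1)
  qed
  moreover have "r ` H \<subseteq> R" using r by blast
  ultimately have hit: "card H \<le> card R" using finR by (simp add: card_inj_on_le)
  have "a1 = a2" if "a1 \<in> nbrs G c - H" "a2 \<in> nbrs G c - H" for a1 a2
    using branches_hit_if_resolving[OF R, of c a1 a2] that by (auto simp: H_def nbrs_def)
  hence miss: "card (nbrs G c - H) \<le> 1"
    using finite_nbrs by (simp add: card_le_Suc0_iff_eq)
  have HN: "H \<subseteq> nbrs G c" by (auto simp: H_def)
  hence "card (nbrs G c) = card H + card (nbrs G c - H)"
    using card_Diff_subset[OF finite_subset[OF HN finite_nbrs] HN] card_mono[OF finite_nbrs HN]
    by simp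
  thus ?thesis using hit miss by linarith
qed

lemma branch_contains_outside:
  assumes "adj G c a" "adj G c' a'" "c \<in> branch c' a'" "c' \<in> branch c a"
    and "y \<in> V" "y \<notin> branch c a"
  shows "y \<in> branch c' a'"
proof -
  have V: "c \<in> V" "c' \<in> V" "a' \<in> V" using adj_in_V assms(1,2) by auto
  have "d y c' = d y c + d c c'" using dist_via_root[OF assms(1) assms(4) assms(5,6)] .
  moreover have "d a' y \<le> d a' c + d c y" using dist_triangle V assms(5) by blast
  moreover have "d a' c < d c' c" using assms(3) by (simp add: branch_def)
  moreover have "d y c' = d c' y" "d y c = d c y" "d c c' = d c' c"
    using dist_sym assms(5) V by auto
  ultimately have "d a' y < d c' y" by linarith
  thus ?thesis using assms(5) by (simp add: branch_def)
qed

lemma no_triangle: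
  assumes "adj G x y" "adj G y z" "adj G z x" "x \<noteq> z"
  shows False
proof -
  have "walk G [x,y,z]" using assms adj_in_V by (auto simp: walk_iff_successively)
  moreover have "distinct [x,y,z]" using assms adj_irrefl by auto
  ultimately have "has_cycle G"
    using assms(3) unfolding has_cycle_def by (intro exI[of _ "[x,y,z]"]) auto
  thus False using tree by (simp add: tree_def)
qed

lemma leaf_ex:
  assumes "V \<noteq> {}"
  shows "\<exists>l\<in>V. card (nbrs G l) \<le> 1"
proof -
  obtain r where r: "r \<in> V" using assms by blast
  have "Max (d r ` V) \<in> d r ` V" using finite_V assms by (intro Max_in) auto
  then obtain l where "Max (d r ` V) = d r l" "l \<in> V" by (rule imageE)
  hence l: "l \<in> V" "\<And>u. u \<in> V \<Longrightarrow> d r u \<le> d r l"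
    using Max_ge[OF finite_imageI[OF finite_V] imageI, of _ "d r"] by auto
  have closer: "d u r < d l r" if "adj G l u" for u
  proof -
    have "u \<in> V" using adj_in_V that by blast
    hence "d u r \<le> d l r" using l dist_sym[OF _ r] by simp
    thus ?thesis using dist_adj_cases[OF that r] by linarith
  qed
  have "u1 = u2" if "u1 \<in> nbrs G l" "u2 \<in> nbrs G l" for u1 u2
  proof (rule ccontr)
    assume "u1 \<noteq> u2"
    moreover have "adj G l u1" "adj G l u2" using that by (simp_all add: nbrs_def)
    ultimately show False using no_two_nbrs_closer r closer by blast
  qed
  hence "card (nbrs G l) \<le> 1" using finite_nbrs by (simp add: card_le_Suc0_iff_eq)
  thus ?thesis using l(1) by blast
qed

lemma resolving_leaf:
  assumes "l \<in> V" "card (nbrs G l) \<le> 1" "\<And>v. card (nbrs G v) \<le> 2"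
  shows "resolving_set G {l}"
proof (rule resolving_if_branches_hit)
  fix c a b assume cab: "adj G c a" "adj G c b" "a \<noteq> b"
  show "branch c a \<inter> {l} \<noteq> {} \<or> branch c b \<inter> {l} \<noteq> {}"
  proof (cases "c = l")
    case True
    hence "card {a, b} \<le> card (nbrs G l)"
      using cab finite_nbrs by (intro card_mono) (auto simp: nbrs_def)
    thus ?thesis using assms(2) cab(3) by simp
  next
    case False
    obtain a' where a': "adj G c a'" "l \<in> branch c a'"
      using in_some_branch adj_in_V cab(1) assms(1) False by metis
    have "a' = a \<or> a' = b"
    proof (rule ccontr)
      assume new: "\<not> (a' = a \<or> a' = b)"
      hence "card {a, b, a'} \<le> card (nbrs G c)"
        using cab a' finite_nbrs by (intro card_mono) (auto simp: nbrs_def)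
      thus False using assms(3)[of c] cab(3) new by auto
    qed
    thus ?thesis using a' by auto
  qed
qed (use assms(1) in auto)


lemma iso_path_graph_2:
  assumes "V = {s, p}" "adj G s p"
  shows "graph_iso G (path_graph 2)"
proof (rule graph_iso_if_bij_betw)
  define \<psi> where "\<psi> i = (if i = (0::nat) then s else p)" for i
  have verts: "verts (path_graph 2) = {0, 1}" by (auto simp: path_graph_verts)
  have "s \<noteq> p" using assms(2) adj_irrefl by blast
  thus "bij_betw \<psi> (verts (path_graph 2)) V"
    unfolding assms(1) verts bij_betw_def inj_on_def \<psi>_def by auto
  show "adj (path_graph 2) i j \<longleftrightarrow> adj G (\<psi> i) (\<psi> j)"
    if "i \<in> verts (path_graph 2)" "j \<in> verts (path_graph 2)" for i j
    using that assms(2) adj_sym[OF assms(2)] adj_irrefl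
    unfolding verts path_graph_adj \<psi>_def by auto
qed

lemma iso_path_graph_3:
  assumes "V = {s, p, q}" "adj G s p" "adj G p q" "s \<noteq> q"
  shows "graph_iso G (path_graph 3)"
proof (rule graph_iso_if_bij_betw)
  define \<psi> where "\<psi> i = (if i = (0::nat) then s else if i = 1 then p else q)" for i
  have verts: "verts (path_graph 3) = {0, 1, 2}" by (auto simp: path_graph_verts)
  have "\<not> adj G s q" "\<not> adj G q s"
    using no_triangle[OF assms(2,3)] adj_sym assms(4) by blast+
  moreover have "s \<noteq> p" "p \<noteq> q" using assms(2,3) adj_irrefl by blast+
  ultimately show "bij_betw \<psi> (verts (path_graph 3)) V"
    using assms(4) unfolding assms(1) verts bij_betw_def inj_on_def \<psi>_def by auto
  show "adj (path_graph 3) i j \<longleftrightarrow> adj G (\<psi> i) (\<psi> j)"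
    if "i \<in> verts (path_graph 3)" "j \<in> verts (path_graph 3)" for i j
    using that assms adj_sym[OF assms(2)] adj_sym[OF assms(3)] adj_irrefl \<open>\<not> adj G s q\<close>
      \<open>\<not> adj G q s\<close>
    unfolding verts path_graph_adj \<psi>_def by auto
qed

end

section \<open>Metric and broadcast dimension\<close>

context tree_graph
begin

lemma trunc_dist_1:
  assumes "u \<in> V" "z \<in> V"
  shows "trunc_dist G 1 u z = adj_dist G u z"
proof -
  have "d u z = 0 \<longleftrightarrow> u = z" using dist_eq_0D[OF assms] dist_self[OF assms(1)] by auto
  moreover have "u \<noteq> z \<Longrightarrow> d u z = 1 \<longleftrightarrow> adj G u z" using dist_eq_1D[OF assms] dist_adj by blast
  ultimately show ?thesis unfolding trunc_dist_def adj_dist_def by auto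
qed

lemma resolving_set_V: "resolving_set G V"
  unfolding resolving_set_def
proof (intro conjI subset_refl ballI impI)
  fix x y assume "x \<in> V" "y \<in> V" "x \<noteq> y"
  moreover have "d y x \<noteq> 0" using dist_eq_0D[of y x] calculation by auto
  ultimately show "\<exists>z\<in>V. d x z \<noteq> d y z" using dist_self by (intro bexI[of _ x]) auto
qed

lemma adjacency_resolving_V: "adjacency_resolving G V"
  unfolding adjacency_resolving_def
proof (intro conjI subset_refl ballI impI)
  fix x y assume "x \<in> V" "y \<in> V" "x \<noteq> y"
  thus "\<exists>z\<in>V. adj_dist G x z \<noteq> adj_dist G y z"
    by (intro bexI[of _ x]) (auto simp: adj_dist_def)
qed

lemma metric_dim_attained: "\<exists>R. resolving_set G R \<and> card R = metric_dim G"
  unfolding metric_dim_def by (rule LeastI_ex) (use resolving_set_V in blast)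

lemma metric_dim_le: "resolving_set G R \<Longrightarrow> metric_dim G \<le> card R"
  unfolding metric_dim_def by (rule Least_le) blast

lemma resolving_broadcast_indicator:
  assumes "adjacency_resolving G Q"
  shows "resolving_broadcast G (\<lambda>v. if v \<in> Q then 1 else 0)"
  unfolding resolving_broadcast_def
proof (intro ballI impI)
  fix x y assume xy: "x \<in> V" "y \<in> V" "x \<noteq> y"
  then obtain z where "z \<in> Q" "adj_dist G x z \<noteq> adj_dist G y z"
    using assms unfolding adjacency_resolving_def by blast
  moreover have "z \<in> V" using assms calculation(1) by (auto simp: adjacency_resolving_def)
  ultimately show "\<exists>z\<in>V. 0 < (if z \<in> Q then 1 else 0::nat) \<and>
      trunc_dist G (if z \<in> Q then 1 else 0) x z \<noteq> trunc_dist G (if z \<in> Q then 1 else 0) y z"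
    using trunc_dist_1 xy by (intro bexI[of _ z]) auto
qed

lemma broadcast_dim_attained: "\<exists>f. resolving_broadcast G f \<and> (\<Sum>v\<in>V. f v) = broadcast_dim G"
  unfolding broadcast_dim_def
  by (rule LeastI_ex) (use resolving_broadcast_indicator[OF adjacency_resolving_V] in blast)

lemma broadcast_dim_le: "resolving_broadcast G f \<Longrightarrow> broadcast_dim G \<le> (\<Sum>v\<in>V. f v)"
  unfolding broadcast_dim_def by (rule Least_le) blast

lemma resolving_set_support:
  assumes "resolving_broadcast G f"
  shows "resolving_set G {v\<in>V. f v > 0}"
  unfolding resolving_set_def
proof (intro conjI ballI impI)
  fix x y assume "x \<in> V" "y \<in> V" "x \<noteq> y"
  then obtain z where "z \<in> V" "f z > 0" "trunc_dist G (f z) x z \<noteq> trunc_dist G (f z) y z"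
    using assms unfolding resolving_broadcast_def by blast
  thus "\<exists>z\<in>{v \<in> V. 0 < f v}. d x z \<noteq> d y z" unfolding trunc_dist_def by auto
qed auto

lemma card_support_le_sum: "card {v\<in>V. f v > 0} \<le> (\<Sum>v\<in>V. f v)"
proof -
  have "card {v\<in>V. f v > 0} = (\<Sum>v\<in>{v\<in>V. f v > 0}. 1)" by simp
  also have "\<dots> \<le> (\<Sum>v\<in>{v\<in>V. f v > 0}. f v)" by (rule sum_mono) auto
  also have "\<dots> \<le> (\<Sum>v\<in>V. f v)" by (rule sum_mono2) (use finite_V in auto)
  finally show ?thesis .
qed

lemma metric_dim_le_broadcast_dim: "metric_dim G \<le> broadcast_dim G"
proof -
  obtain f where f: "resolving_broadcast G f" "(\<Sum>v\<in>V. f v) = broadcast_dim G"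
    using broadcast_dim_attained by blast
  have "metric_dim G \<le> card {v\<in>V. f v > 0}"
    by (rule metric_dim_le[OF resolving_set_support[OF f(1)]])
  also have "\<dots> \<le> broadcast_dim G" using card_support_le_sum[of f] f(2) by simp
  finally show ?thesis .
qed

lemma dims_eq_if_adjacency_resolving:
  assumes "adjacency_resolving G Q" "\<And>R. resolving_set G R \<Longrightarrow> card Q \<le> card R"
  shows "metric_dim G = broadcast_dim G"
proof -
  have QV: "Q \<subseteq> V" using assms(1) by (simp add: adjacency_resolving_def)
  have "(\<Sum>v\<in>V. if v \<in> Q then 1 else 0) = card Q"
    using QV finite_V by (simp add: sum.If_cases Int_absorb1)
  hence "broadcast_dim G \<le> card Q"
    using broadcast_dim_le[OF resolving_broadcast_indicator[OF assms(1)]] by simp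
  moreover obtain R where "resolving_set G R" "card R = metric_dim G"
    using metric_dim_attained by blast
  hence "card Q \<le> metric_dim G" using assms(2) by metis
  ultimately show ?thesis using metric_dim_le_broadcast_dim by linarith
qed

lemma adjacency_resolving_if_dims_eq:
  assumes "metric_dim G = broadcast_dim G"
  shows "\<exists>S. adjacency_resolving G S \<and> card S = metric_dim G"
proof -
  obtain f where f: "resolving_broadcast G f" "(\<Sum>v\<in>V. f v) = broadcast_dim G"
    using broadcast_dim_attained by blast
  define P where "P = {v\<in>V. f v > 0}"
  have finP: "finite P" using finite_V by (simp add: P_def)
  have dimP: "metric_dim G \<le> card P"
    using metric_dim_le[OF resolving_set_support[OF f(1)]] by (simp add: P_def)
  have "(\<Sum>v\<in>V. f v) = (\<Sum>v\<in>P. f v)"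
    by (rule sum.mono_neutral_right[OF finite_V]) (auto simp: P_def)
  hence sum: "(\<Sum>v\<in>P. f v) = metric_dim G" using f(2) assms by simp
  have one: "f v = 1" if "v \<in> P" for v
  proof (rule ccontr)
    assume "f v \<noteq> 1"
    have "(\<Sum>u\<in>P. 1) < (\<Sum>u\<in>P. f u)"
      by (rule sum_strict_mono_ex1[OF finP]) (use that \<open>f v \<noteq> 1\<close> in \<open>auto simp: P_def\<close>)
    thus False using sum dimP by simp
  qed
  have cardP: "card P = metric_dim G"
    using sum sum.cong[OF refl one, of P] by simp
  have "adjacency_resolving G P"
    unfolding adjacency_resolving_def
  proof (intro conjI ballI impI)
    fix x y assume xy: "x \<in> V" "y \<in> V" "x \<noteq> y"
    then obtain z where z: "z \<in> V" "f z > 0" "trunc_dist G (f z) x z \<noteq> trunc_dist G (f z) y z"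
      using f(1) unfolding resolving_broadcast_def by blast
    hence "z \<in> P" by (simp add: P_def)
    moreover have "trunc_dist G 1 x z \<noteq> trunc_dist G 1 y z" using z one[OF \<open>z \<in> P\<close>] by simp
    ultimately show "\<exists>z\<in>P. adj_dist G x z \<noteq> adj_dist G y z"
      using z(1) trunc_dist_1 xy by (metis (no_types))
  qed (auto simp: P_def)
  thus ?thesis using cardP by blast
qed

lemma card_resolving_ge_1:
  assumes "card V \<ge> 2" "resolving_set G R"
  shows "card R \<ge> 1"
proof -
  have "R \<subseteq> V" using assms(2) by (simp add: resolving_set_def)
  hence finR: "finite R" using finite_V finite_subset by blast
  have "\<not> card V \<le> Suc 0" using assms(1) by simp
  then obtain u w where "u \<in> V" "w \<in> V" "u \<noteq> w"
    using card_le_Suc0_iff_eq[OF finite_V] by blast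
  then obtain z where "z \<in> R" using assms(2) unfolding resolving_set_def by blast
  thus ?thesis using finR by (metis One_nat_def Suc_leI card_gt_0_iff empty_iff)
qed

lemma dims_eq_path_graph:
  assumes iso: "graph_iso G (path_graph n)" and n: "n = 2 \<or> n = 3"
  shows "metric_dim G = broadcast_dim G"
proof -
  obtain \<phi> where \<phi>: "bij_betw \<phi> V (verts (path_graph n))"
    and adj: "\<forall>x\<in>V. \<forall>y\<in>V. adj G x y \<longleftrightarrow> adj (path_graph n) (\<phi> x) (\<phi> y)"
    using iso unfolding graph_iso_def by blast
  have Q: "adjacency_resolving (path_graph n) {0}"
    using n by (intro adjacency_resolving_path_graph) auto
  have "card V \<ge> 2" using bij_betw_same_card[OF \<phi>] n by (auto simp: path_graph_verts)
  thus ?thesis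
    using dims_eq_if_adjacency_resolving[OF adjacency_resolving_iso(1)[OF \<phi> adj Q]]
      adjacency_resolving_iso(2)[OF \<phi> adj Q] card_resolving_ge_1 by simp
qed

lemma dims_eq_subdivided_star:
  assumes iso: "graph_iso G (subdivided_star x S)"
    and "x \<ge> 3" "S \<subseteq> {1..x}" "card S \<le> x - 1"
  shows "metric_dim G = broadcast_dim G"
proof -
  let ?H = "subdivided_star x S"
  obtain \<phi> where \<phi>: "bij_betw \<phi> V (verts ?H)"
    and adj: "\<forall>u\<in>V. \<forall>v\<in>V. adj G u v \<longleftrightarrow> adj ?H (\<phi> u) (\<phi> v)"
    using iso unfolding graph_iso_def by blast
  have "S \<noteq> {1..x}" using assms(2,4) by auto
  then obtain i where i: "i \<in> {1..x}" "i \<notin> S" using assms(3) by blast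
  note Q = adjacency_resolving_subdivided_star[OF assms(2) i]
  have "(0,0) \<in> \<phi> ` V" using \<phi> by (simp add: bij_betw_def subdivided_star_verts)
  then obtain c where c: "\<phi> c = (0,0)" "c \<in> V" by (metis imageE)
  have "card (nbrs G c) = x"
    using card_nbrs_iso[OF \<phi> adj _ subdivided_star_adj_verts c(2)] c(1) adj_in_V
    by (simp add: card_nbrs_star_centre)
  hence "card R \<ge> x - 1" if "resolving_set G R" for R
    using card_nbrs_le_resolving[OF that, of c] by simp
  thus ?thesis
    using dims_eq_if_adjacency_resolving[OF adjacency_resolving_iso(1)[OF \<phi> adj Q(1)]]
      adjacency_resolving_iso(2)[OF \<phi> adj Q(1)] Q(2) by simp
qed

end

section \<open>Minimum resolving sets that are adjacency resolving\<close>

lemma card_le_Suc_if_subset_insert: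
  assumes "finite A" "B \<subseteq> insert x A" "card A \<le> n"
  shows "card B \<le> Suc n"
proof -
  have "card B \<le> card (insert x A)" using assms(1,2) by (intro card_mono) auto
  also have "\<dots> \<le> Suc (card A)" using assms(1) by (simp add: card_insert_if)
  finally show ?thesis using assms(3) by simp
qed

locale min_adjacency_resolving = tree_graph +
  fixes S :: "'a set"
  assumes adjacency_resolving_S: "adjacency_resolving G S"
    and card_S_le: "\<And>R. resolving_set G R \<Longrightarrow> card S \<le> card R"
    and card_V_ge_2: "card V \<ge> 2"
begin

lemma S_subset_V: "S \<subseteq> V"
  using adjacency_resolving_S by (simp add: adjacency_resolving_def)

lemma finite_S: "finite S"
  using S_subset_V finite_V finite_subset by blast

lemma S_nonempty: "S \<noteq> {}"
proof -
  have "\<not> card V \<le> Suc 0" using card_V_ge_2 by simp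
  then obtain u w where "u \<in> V" "w \<in> V" "u \<noteq> w"
    using card_le_Suc0_iff_eq[OF finite_V] by blast
  thus ?thesis using adjacency_resolving_S unfolding adjacency_resolving_def by blast
qed

lemma eq_if_same_S_nbrs:
  assumes "u \<in> V - S" "w \<in> V - S" "\<And>z. z \<in> S \<Longrightarrow> adj G u z \<longleftrightarrow> adj G w z"
  shows "u = w"
proof (rule ccontr)
  assume "u \<noteq> w"
  then obtain z where z: "z \<in> S" "adj_dist G u z \<noteq> adj_dist G w z"
    using adjacency_resolving_S assms unfolding adjacency_resolving_def by blast
  have "u \<noteq> z" "w \<noteq> z" using z assms by auto
  thus False using z assms(3)[OF z(1)] by (simp add: adj_dist_def)
qed

definition undominated :: "'a set" where
  "undominated = {v\<in>V - S. \<forall>z\<in>S. \<not> adj G v z}"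

definition private_nbrs :: "'a \<Rightarrow> 'a set" where
  "private_nbrs t = {v\<in>V - S. \<forall>z\<in>S. adj G v z \<longleftrightarrow> z = t}"

lemma undominated_unique: "u \<in> undominated \<Longrightarrow> w \<in> undominated \<Longrightarrow> u = w"
  by (rule eq_if_same_S_nbrs) (auto simp: undominated_def)

lemma private_nbr_unique: "u \<in> private_nbrs t \<Longrightarrow> w \<in> private_nbrs t \<Longrightarrow> u = w"
  by (rule eq_if_same_S_nbrs) (auto simp: private_nbrs_def)

lemma finite_undominated: "finite undominated"
  using finite_V by (simp add: undominated_def)

lemma finite_private_nbrs: "finite (private_nbrs t)"
  using finite_V by (simp add: private_nbrs_def)

lemma card_undominated_le_1: "card undominated \<le> 1"
  using undominated_unique finite_undominated by (simp add: card_le_Suc0_iff_eq)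

lemma card_private_nbrs_le_1: "card (private_nbrs t) \<le> 1"
  using private_nbr_unique finite_private_nbrs by (simp add: card_le_Suc0_iff_eq)

lemma card_V_le_3_if_card_S_1:
  assumes "card S = 1"
  shows "card V \<le> 3"
proof -
  obtain s where s: "S = {s}" using assms card_1_singletonE by blast
  have "inj_on (\<lambda>v. adj_dist G v s) V"
    using adjacency_resolving_S s unfolding adjacency_resolving_def inj_on_def by blast
  moreover have "(\<lambda>v. adj_dist G v s) ` V \<subseteq> {0,1,2}" by (auto simp: adj_dist_def)
  ultimately have "card V \<le> card {0::nat,1,2}" by (intro card_inj_on_le) auto
  thus ?thesis by simp
qed

lemma S_nbr_eq_root:
  assumes "adj G c a" "z \<in> S" "adj G a z" "branch c a \<inter> S = {}"
  shows "z = c"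
  using branch_nbr[OF assms(1) nbr_in_branch[OF assms(1)] assms(3)] assms(2,4) by blast

lemma branch_meets_S:
  assumes "adj G c a" "adj G c b" "a \<noteq> b" "branch c a \<inter> S = {}"
  shows "branch c b \<inter> S \<noteq> {}"
proof
  assume b: "branch c b \<inter> S = {}"
  have "a \<in> V - S" "b \<in> V - S" using adj_in_V nbr_in_branch assms(1,2,4) b by blast+
  moreover have "adj G a z \<longleftrightarrow> adj G b z" if "z \<in> S" for z
    using S_nbr_eq_root[OF assms(1) that _ assms(4)] S_nbr_eq_root[OF assms(2) that _ b]
      assms(1,2) adj_sym by blast
  ultimately show False using eq_if_same_S_nbrs assms(3) by blast
qed

text \<open>A certificate that \<open>S - {t}\<close> violates the branch criterion at \<open>c\<close>.\<close>

definition critical :: "'a \<Rightarrow> 'a \<Rightarrow> 'a \<Rightarrow> 'a \<Rightarrow> bool" where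
  "critical t c a b \<longleftrightarrow> adj G c a \<and> adj G c b \<and> a \<noteq> b \<and>
     branch c a \<inter> S = {t} \<and> branch c b \<inter> S = {}"

lemma criticalD:
  assumes "critical t c a b"
  shows "adj G c a" "adj G c b" "a \<noteq> b" "t \<in> S" "t \<in> branch c a"
    "branch c a \<inter> S = {t}" "branch c b \<inter> S = {}"
  using assms unfolding critical_def by auto

lemma critical_ex:
  assumes "card S \<ge> 2" "t \<in> S"
  shows "\<exists>c a b. critical t c a b"
proof -
  let ?R = "S - {t}"
  have "card ?R = card S - 1" using assms finite_S by simp
  hence "card ?R \<noteq> 0" using assms(1) by simp
  hence "?R \<noteq> {}" by force
  moreover have "card ?R < card S" using assms finite_S by (simp add: card_Diff1_less)
  hence "\<not> resolving_set G ?R" using card_S_le by (meson not_le)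
  ultimately obtain c a b where cab: "adj G c a" "adj G c b" "a \<noteq> b"
    "branch c a \<inter> ?R = {}" "branch c b \<inter> ?R = {}"
    using resolving_if_branches_hit[of ?R] S_subset_V by blast
  have "t \<in> branch c a \<or> t \<in> branch c b"
    using branch_meets_S[OF cab(1-3)] cab(4,5) by blast
  thus ?thesis
  proof
    assume "t \<in> branch c a"
    hence "critical t c a b"
      using cab branches_disjoint assms(2) unfolding critical_def by blast
    thus ?thesis by blast
  next
    assume "t \<in> branch c b"
    hence "critical t c b a"
      using cab branches_disjoint assms(2) unfolding critical_def by blast
    thus ?thesis by blast
  qed
qed

lemma max_degree_ge_3:
  assumes "card S \<ge> 2"
  shows "\<exists>v. card (nbrs G v) \<ge> 3"
proof (rule ccontr)
  assume no3: "\<not> ?thesis"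
  have "card (nbrs G v) \<le> 2" for v
  proof -
    have "\<not> 3 \<le> card (nbrs G v)" using no3 by blast
    thus ?thesis by linarith
  qed
  moreover obtain l where "l \<in> V" "card (nbrs G l) \<le> 1"
    using leaf_ex card_V_ge_2 by fastforce
  ultimately have "resolving_set G {l}" by (intro resolving_leaf)
  thus False using card_S_le assms by fastforce
qed

lemma critical_leaf:
  assumes "critical t c a b" "c \<notin> S"
  shows "b \<in> undominated" "branch c b = {b}"
proof -
  note cr = criticalD[OF assms(1)]
  have undom: "y \<in> undominated" if "y \<in> branch c b" for y
  proof -
    have "\<not> adj G y z" if "z \<in> S" for z
      using branch_nbr[OF cr(2) \<open>y \<in> branch c b\<close>, of z] cr(7) assms(2) that by blast
    thus ?thesis using that cr(7) branch_in_V unfolding undominated_def by blast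
  qed
  thus "b \<in> undominated" using nbr_in_branch[OF cr(2)] by blast
  show "branch c b = {b}"
    using undom undominated_unique nbr_in_branch[OF cr(2)] by blast
qed

end

text \<open>A critical configuration whose root lies in \<open>S\<close> forces \<open>S = {c, t}\<close>, and then a vertex
  of degree three exists only at \<open>a\<close>, which yields a critical configuration rooted at \<open>a \<notin> S\<close>.\<close>

locale critical_root_in_S = min_adjacency_resolving +
  fixes t c a b :: 'a
  assumes critical: "critical t c a b"
    and root_in_S: "c \<in> S"
    and card_S_ge_2: "card S \<ge> 2"
begin

lemmas cr = criticalD[OF critical]

lemma c_in_V: "c \<in> V"
  using adj_in_V cr(1) by blast

lemma S_outside_branch:
  assumes "y \<in> S" "y \<notin> branch c a"
  shows "y = c"
proof -
  obtain c' a' b' where cr': "critical c c' a' b'"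
    using critical_ex card_S_ge_2 root_in_S by blast
  note cr' = criticalD[OF cr']
  have "c' \<in> V" using adj_in_V cr'(1) by blast
  moreover have "c' \<noteq> c" using root_notin_branch[OF \<open>c' \<in> V\<close>] cr'(5) by blast
  ultimately obtain a'' where a'': "adj G c a''" "c' \<in> branch c a''"
    using in_some_branch c_in_V by metis
  have "a'' = a"
  proof (rule ccontr)
    assume "a'' \<noteq> a"
    hence "t \<notin> branch c a''" using branches_disjoint[OF cr(1) a''(1)] cr(5) by blast
    hence "t \<in> branch c' a'"
      using branch_contains_outside[OF a''(1) cr'(1) cr'(5) a''(2)] cr(4) S_subset_V by blast
    hence "t = c" using cr'(6) cr(4) by blast
    thus False using root_notin_branch[OF c_in_V] cr(5) by simp
  qed
  hence "y \<in> branch c' a'"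
    using branch_contains_outside[OF cr(1) cr'(1) cr'(5)] a'' assms S_subset_V by blast
  thus ?thesis using cr'(6) assms(1) by blast
qed

lemma S_eq: "S = {c, t}"
  using S_outside_branch cr(6) root_in_S cr(4) by blast

lemma root_nbrs: "adj G c a' \<Longrightarrow> a' = a \<or> a' = b"
proof (rule ccontr)
  assume a': "adj G c a'" "\<not> (a' = a \<or> a' = b)"
  have "branch c a' \<inter> S = {}"
    using S_outside_branch branches_disjoint[OF a'(1) cr(1)] root_notin_branch[OF c_in_V] a'(2)
    by blast
  thus False using branch_meets_S[OF a'(1) cr(2)] a'(2) cr(7) by blast
qed

lemma verts_split: "y \<in> V \<Longrightarrow> y = c \<or> y \<in> branch c a \<or> y \<in> branch c b"
  using in_some_branch[OF c_in_V] root_nbrs by metis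

lemma t_neq_c: "t \<noteq> c"
  using root_notin_branch[OF c_in_V] cr(5) by blast

lemma a_notin_S: "a \<noteq> t \<Longrightarrow> a \<notin> S"
  using cr(6) nbr_in_branch[OF cr(1)] by blast

lemma adj_a_t:
  assumes "a \<noteq> t"
  shows "adj G a t"
proof (rule ccontr)
  assume nat: "\<not> adj G a t"
  have "\<not> adj G b t" using S_nbr_eq_root[OF cr(2) cr(4) _ cr(7)] t_neq_c by blast
  hence "adj G a z \<longleftrightarrow> adj G b z" if "z \<in> S" for z
    using that nat S_eq adj_sym[OF cr(1)] adj_sym[OF cr(2)] by blast
  moreover have "a \<in> V - S" "b \<in> V - S"
    using a_notin_S[OF assms] adj_in_V[OF cr(1)] adj_in_V[OF cr(2)] nbr_in_branch[OF cr(2)] cr(7)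
    by blast+
  ultimately have "a = b" using eq_if_same_S_nbrs by blast
  thus False using cr(3) by simp
qed

lemma branch_a_cases:
  assumes "y \<in> branch c a"
  shows "y = t \<or> y = a \<or> y \<in> undominated \<or> y \<in> private_nbrs t"
proof -
  have "z = t" if "y \<noteq> a" "z \<in> S" "adj G y z" for z
    using branch_nbr[OF cr(1) assms that(3)] cr(6) that by blast
  moreover have "y \<notin> S" if "y \<noteq> t" using cr(6) assms that by blast
  ultimately show ?thesis
    using branch_in_V[OF assms] unfolding undominated_def private_nbrs_def by blast
qed

lemma branch_b_undominated:
  assumes "y \<in> branch c b" "y \<noteq> b"
  shows "y \<in> undominated"
  using branch_nbr[OF cr(2) assms(1)] assms cr(7) branch_in_V
  unfolding undominated_def by blast

lemma nbrs_in_branch_a: "v \<in> branch c a \<Longrightarrow> v \<noteq> a \<Longrightarrow> nbrs G v \<subseteq> branch c a"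
  using branch_nbr[OF cr(1)] by (auto simp: nbrs_def)

lemma nbrs_root: "nbrs G c \<subseteq> {a, b}"
  using root_nbrs by (auto simp: nbrs_def)

lemma nbrs_branch_b: "v \<in> branch c b \<Longrightarrow> nbrs G v \<subseteq> insert (if v = b then c else b) undominated"
  using branch_nbr[OF cr(2)] branch_b_undominated adj_irrefl by (auto simp: nbrs_def)

lemma nbrs_t: "nbrs G t \<subseteq> insert (if t = a then c else a) (private_nbrs t)"
proof
  fix n assume n: "n \<in> nbrs G t"
  hence "n \<notin> undominated" "n \<noteq> t"
    using adj_sym adj_irrefl cr(4) by (auto simp: nbrs_def undominated_def)
  moreover have "n \<in> branch c a \<or> (t = a \<and> n = c)"
    using branch_nbr[OF cr(1) cr(5)] n by (simp add: nbrs_def)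
  ultimately show "n \<in> insert (if t = a then c else a) (private_nbrs t)"
    using branch_a_cases by auto
qed

lemma nbrs_undominated:
  assumes "v \<in> branch c a" "v \<noteq> a" "v \<in> undominated"
  shows "nbrs G v \<subseteq> insert a (private_nbrs t)"
proof
  fix n assume n: "n \<in> nbrs G v"
  hence "n \<noteq> t" "n \<noteq> v" using assms(3) cr(4) adj_irrefl by (auto simp: nbrs_def undominated_def)
  thus "n \<in> insert a (private_nbrs t)"
    using n nbrs_in_branch_a[OF assms(1,2)] branch_a_cases undominated_unique[OF assms(3)]
    by blast
qed

lemma nbrs_private_nbr:
  assumes "v \<in> branch c a" "v \<noteq> a" "v \<in> private_nbrs t"
  shows "nbrs G v \<subseteq> insert t undominated \<or> nbrs G v \<subseteq> insert a undominated"
proof -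
  have "nbrs G v \<subseteq> insert t (insert a undominated)"
  proof
    fix n assume "n \<in> nbrs G v"
    hence "n \<noteq> v" "n \<in> branch c a"
      using adj_irrefl nbrs_in_branch_a[OF assms(1,2)] by (auto simp: nbrs_def)
    hence "n \<notin> private_nbrs t" using private_nbr_unique[OF assms(3)] by blast
    thus "n \<in> insert t (insert a undominated)" using branch_a_cases[OF \<open>n \<in> branch c a\<close>] by blast
  qed
  moreover have "v \<noteq> t" using assms(3) cr(4) by (auto simp: private_nbrs_def)
  hence "a \<notin> nbrs G v \<or> t \<notin> nbrs G v \<or> a = t"
    using no_triangle[of v a t] adj_a_t adj_sym by (auto simp: nbrs_def)
  ultimately show ?thesis by blast
qed

lemma card_nbrs_le_2:
  assumes "v \<noteq> a \<or> v = t"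
  shows "card (nbrs G v) \<le> 2"
proof -
  have Z: "card B \<le> 2" if "B \<subseteq> insert x undominated" for B x
    using card_le_Suc_if_subset_insert[OF finite_undominated that card_undominated_le_1] by simp
  have P: "card B \<le> 2" if "B \<subseteq> insert x (private_nbrs t)" for B x
    using card_le_Suc_if_subset_insert[OF finite_private_nbrs that card_private_nbrs_le_1] by simp
  consider "v = c" | "v \<in> branch c b" | "v = t" | "v \<in> branch c a" "v \<noteq> a" "v \<in> undominated"
    | "v \<in> branch c a" "v \<noteq> a" "v \<in> private_nbrs t" | "v \<notin> V"
    using verts_split branch_a_cases assms by blast
  thus ?thesis
  proof cases
    case 1 thus ?thesis using card_le_Suc_if_subset_insert[OF _ nbrs_root, of 1] by simp
  next
    case 2 thus ?thesis using Z[OF nbrs_branch_b] by simp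
  next
    case 3 thus ?thesis using P[OF nbrs_t] by simp
  next
    case 4 thus ?thesis using P[OF nbrs_undominated] by simp
  next
    case 5 thus ?thesis using Z[of "nbrs G v" t] Z[of "nbrs G v" a] nbrs_private_nbr by blast
  next
    case 6
    hence "nbrs G v = {}" using adj_in_V by (auto simp: nbrs_def)
    thus ?thesis by simp
  qed
qed

lemma nbrs_a:
  assumes "a \<noteq> t"
  shows "nbrs G a \<subseteq> {c, t} \<union> undominated"
proof
  fix n assume n: "n \<in> nbrs G a"
  have "n \<notin> private_nbrs t"
  proof
    assume "n \<in> private_nbrs t"
    hence "adj G n t" using cr(4) by (simp add: private_nbrs_def)
    thus False
      using no_triangle[of a n t] n adj_a_t[OF assms] adj_sym assms by (auto simp: nbrs_def)
  qed
  moreover have "n = c \<or> n \<in> branch c a"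
    using branch_nbr[OF cr(1) nbr_in_branch[OF cr(1)]] n by (auto simp: nbrs_def)
  ultimately show "n \<in> {c, t} \<union> undominated"
    using branch_a_cases n adj_irrefl by (auto simp: nbrs_def)
qed

lemma critical_at_a: "\<exists>z. critical t a t z \<and> a \<notin> S"
proof -
  obtain v where v: "card (nbrs G v) \<ge> 3" using max_degree_ge_3 card_S_ge_2 by blast
  hence "v = a" "a \<noteq> t" using card_nbrs_le_2[of v] by auto
  have "nbrs G a \<inter> undominated \<noteq> {}"
  proof
    assume "nbrs G a \<inter> undominated = {}"
    hence "card (nbrs G a) \<le> card {c, t}" using nbrs_a[OF \<open>a \<noteq> t\<close>] by (intro card_mono) auto
    thus False using v \<open>v = a\<close> card_le_Suc_if_subset_insert[of "{t}" "{c, t}" c 1] by simp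
  qed
  then obtain z where z: "adj G a z" "z \<in> undominated" by (auto simp: nbrs_def)
  have at: "adj G a t" using adj_a_t[OF \<open>a \<noteq> t\<close>] .
  have ac: "adj G a c" using cr(1) adj_sym by blast
  have "z \<notin> S" "c \<noteq> t" using z(2) root_in_S cr(5) root_notin_branch[OF c_in_V]
    by (auto simp: undominated_def)
  hence "c \<notin> branch a t" "c \<notin> branch a z" "t \<notin> branch a z"
    using branches_disjoint[OF ac at] branches_disjoint[OF ac z(1)] branches_disjoint[OF at z(1)]
      nbr_in_branch[OF ac] nbr_in_branch[OF at] root_in_S cr(4) by blast+
  hence "critical t a t z"
    unfolding critical_def using at z(1) nbr_in_branch[OF at] S_eq \<open>z \<notin> S\<close> cr(4) by blast
  thus ?thesis using a_notin_S[OF \<open>a \<noteq> t\<close>] by blast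
qed

end

context min_adjacency_resolving
begin

lemma critical_root_notin_S:
  assumes "card S \<ge> 2" "t \<in> S"
  shows "\<exists>c a b. critical t c a b \<and> c \<notin> S"
proof -
  obtain c a b where cr: "critical t c a b" using critical_ex[OF assms] by blast
  show ?thesis
  proof (cases "c \<in> S")
    case True
    interpret critical_root_in_S G S t c a b
      using cr True assms(1) by unfold_locales
    show ?thesis using critical_at_a by blast
  qed (use cr in blast)
qed

end

text \<open>The situation produced by \<open>critical_leaf\<close>.\<close>

locale star_centre = min_adjacency_resolving +
  fixes ce z :: 'a
  assumes card_S_ge_2: "card S \<ge> 2"
    and adj_ce_z: "adj G ce z"
    and ce_notin_S: "ce \<notin> S"
    and z_undominated: "z \<in> undominated"
    and branch_z: "branch ce z = {z}"
begin

lemma ce_in_V: "ce \<in> V"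
  using adj_in_V adj_ce_z by blast

lemma z_leaf:
  assumes "adj G z u"
  shows "u = ce"
proof -
  have "u \<in> branch ce z \<or> u = ce"
    using branch_nbr[OF adj_ce_z nbr_in_branch[OF adj_ce_z] assms] by blast
  thus ?thesis using branch_z assms adj_irrefl by auto
qed

lemma S_in_branch:
  assumes "t \<in> S"
  shows "\<exists>a. adj G ce a \<and> branch ce a \<inter> S = {t}"
proof -
  obtain c a b where cr: "critical t c a b" "c \<notin> S"
    using critical_root_notin_S[OF card_S_ge_2 assms] by blast
  have "b = z" using critical_leaf[OF cr] undominated_unique z_undominated by blast
  hence "c = ce" using z_leaf adj_sym criticalD(2)[OF cr(1)] by blast
  thus ?thesis using criticalD[OF cr(1)] by blast
qed

lemma branch_meets_S_once:
  assumes "adj G ce a" "a \<noteq> z"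
  shows "\<exists>t. branch ce a \<inter> S = {t}"
proof -
  have "branch ce z \<inter> S = {}" using branch_z z_undominated by (auto simp: undominated_def)
  then obtain t where t: "t \<in> branch ce a" "t \<in> S"
    using branch_meets_S[OF adj_ce_z assms(1)] assms(2) by blast
  obtain a' where a': "adj G ce a'" "branch ce a' \<inter> S = {t}" using S_in_branch[OF t(2)] by blast
  hence "a' = a" using branches_disjoint[OF assms(1) a'(1)] t(1) by blast
  thus ?thesis using a' by blast
qed

lemma branch_private_nbr:
  assumes "adj G ce a" "branch ce a \<inter> S = {t}" "y \<in> branch ce a" "y \<noteq> t"
  shows "y \<in> private_nbrs t"
proof -
  have S_nbr: "u = t" if "u \<in> S" "adj G y u" for u
    using branch_nbr[OF assms(1,3) that(2)] assms(2) that(1) ce_notin_S by blast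
  have "y \<notin> undominated"
  proof
    assume "y \<in> undominated"
    hence "y = z" using undominated_unique z_undominated by blast
    hence "a = z"
      using assms(1,3) branches_disjoint[OF adj_ce_z assms(1)] nbr_in_branch[OF adj_ce_z] by blast
    hence "t = z" using assms(2) branch_z by blast
    thus False using assms(2) z_undominated by (auto simp: undominated_def)
  qed
  then obtain u where "u \<in> S" "adj G y u"
    using branch_in_V[OF assms(3)] assms(2-4) by (auto simp: undominated_def)
  hence "adj G y t" using S_nbr by blast
  thus ?thesis
    using S_nbr branch_in_V[OF assms(3)] assms(2-4) by (auto simp: private_nbrs_def)
qed

lemma branch_card_le_2:
  assumes "adj G ce a" "a \<noteq> z" "y \<in> branch ce a" "y' \<in> branch ce a" "y \<noteq> a" "y' \<noteq> a"
  shows "y = y'"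
proof -
  obtain t where t: "branch ce a \<inter> S = {t}" using branch_meets_S_once assms(1,2) by blast
  note priv = branch_private_nbr[OF assms(1) t]
  show ?thesis
  proof (cases "t = a")
    case True
    thus ?thesis using priv[OF assms(3)] priv[OF assms(4)] assms(5,6) private_nbr_unique by simp
  next
    case False
    hence a: "a \<in> private_nbrs t" using priv nbr_in_branch[OF assms(1)] by blast
    have "y = t"
      using priv[OF assms(3)] private_nbr_unique[OF _ a] assms(5) by blast
    moreover have "y' = t"
      using priv[OF assms(4)] private_nbr_unique[OF _ a] assms(6) by blast
    ultimately show ?thesis by simp
  qed
qed

definition subdivided :: "'a set" where
  "subdivided = {a\<in>nbrs G ce. a \<noteq> z \<and> (\<exists>y. y \<in> branch ce a \<and> y \<noteq> a)}"

definition pendant :: "'a \<Rightarrow> 'a" where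
  "pendant a = (SOME y. y \<in> branch ce a \<and> y \<noteq> a)"

lemma subdividedD: "a \<in> subdivided \<Longrightarrow> adj G ce a \<and> a \<noteq> z"
  by (simp add: subdivided_def nbrs_def)

lemma pendant_in_branch: "a \<in> subdivided \<Longrightarrow> pendant a \<in> branch ce a \<and> pendant a \<noteq> a"
  unfolding subdivided_def pendant_def by (metis (mono_tags, lifting) mem_Collect_eq someI_ex)

lemma branch_subdivided: "a \<in> subdivided \<Longrightarrow> branch ce a = {a, pendant a}"
  using pendant_in_branch subdividedD branch_card_le_2 nbr_in_branch by blast

lemma branch_unsubdivided: "adj G ce a \<Longrightarrow> a \<notin> subdivided \<Longrightarrow> branch ce a = {a}"
  using nbr_in_branch branch_z by (auto simp: subdivided_def nbrs_def)

lemma adj_pendant: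
  assumes "a \<in> subdivided"
  shows "adj G a (pendant a)"
proof -
  let ?y = "pendant a"
  have y: "?y \<in> branch ce a" "?y \<noteq> a" "?y \<noteq> ce"
    using pendant_in_branch[OF assms] root_notin_branch[OF ce_in_V] by auto
  then obtain u where u: "adj G ?y u" using step_towards branch_in_V ce_in_V by metis
  hence "u \<in> branch ce a" using branch_nbr[OF _ y(1)] subdividedD[OF assms] y(2) by blast
  hence "u = a" using u adj_irrefl branch_subdivided[OF assms] by auto
  thus ?thesis using u adj_sym by blast
qed

lemma verts_in_branch: "v \<in> V \<Longrightarrow> v \<noteq> ce \<Longrightarrow> \<exists>a\<in>nbrs G ce. v \<in> branch ce a"
  using in_some_branch[OF ce_in_V] by (auto simp: nbrs_def)

lemma pendant_notin_branch:
  assumes "a \<in> subdivided" "adj G ce a'" "a' \<noteq> a"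
  shows "pendant a \<notin> branch ce a'"
  using branches_disjoint pendant_in_branch subdividedD assms by blast

lemma verts_eq_star: "V = insert ce (nbrs G ce \<union> pendant ` subdivided)"
proof
  show "V \<subseteq> insert ce (nbrs G ce \<union> pendant ` subdivided)"
  proof
    fix v assume "v \<in> V"
    moreover have "v \<in> nbrs G ce \<union> pendant ` subdivided"
      if "a \<in> nbrs G ce" "v \<in> branch ce a" for a
      using that branch_subdivided branch_unsubdivided
      by (cases "a \<in> subdivided") (auto simp: nbrs_def)
    ultimately show "v \<in> insert ce (nbrs G ce \<union> pendant ` subdivided)"
      using verts_in_branch by blast
  qed
  show "insert ce (nbrs G ce \<union> pendant ` subdivided) \<subseteq> V"
    using ce_in_V nbrs_subset_V pendant_in_branch branch_in_V by blast
qed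

text \<open>Every edge avoiding the centre lies inside one branch at the centre, which is either a
  single vertex or a pair \<open>{a, pendant a}\<close>.\<close>

lemma adj_iff_star:
  "adj G u v \<longleftrightarrow> (\<exists>a\<in>nbrs G ce. {u, v} = {ce, a}) \<or> (\<exists>a\<in>subdivided. {u, v} = {a, pendant a})"
proof
  assume uv: "adj G u v"
  show "(\<exists>a\<in>nbrs G ce. {u, v} = {ce, a}) \<or> (\<exists>a\<in>subdivided. {u, v} = {a, pendant a})"
  proof (cases "u = ce \<or> v = ce")
    case True
    thus ?thesis using uv adj_sym by (auto simp: nbrs_def)
  next
    case False
    then obtain a where a: "a \<in> nbrs G ce" "u \<in> branch ce a"
      using verts_in_branch adj_in_V[OF uv] by blast
    hence "v \<in> branch ce a" using branch_nbr[OF _ a(2) uv] False by (auto simp: nbrs_def)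
    moreover have "u \<noteq> v" using uv adj_irrefl by blast
    ultimately show ?thesis
    proof (cases "a \<in> subdivided")
      case True
      hence "{u, v} = {a, pendant a}"
        using branch_subdivided a(2) \<open>v \<in> branch ce a\<close> \<open>u \<noteq> v\<close> by auto
      thus ?thesis using True by blast
    next
      case False
      thus ?thesis
        using branch_unsubdivided a \<open>v \<in> branch ce a\<close> \<open>u \<noteq> v\<close> by (auto simp: nbrs_def)
    qed
  qed
next
  assume "(\<exists>a\<in>nbrs G ce. {u, v} = {ce, a}) \<or> (\<exists>a\<in>subdivided. {u, v} = {a, pendant a})"
  thus "adj G u v" using adj_pendant adj_sym by (auto simp: nbrs_def doubleton_eq_iff)
qed

lemma star_shaped: "star_shaped G ce (nbrs G ce) subdivided pendant"
proof
  show "finite (nbrs G ce)" by (rule finite_nbrs)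
  show "ce \<notin> nbrs G ce" using adj_irrefl by (simp add: nbrs_def)
  show "subdivided \<subseteq> nbrs G ce" by (auto simp: subdivided_def)
  show "inj_on pendant subdivided"
    using pendant_notin_branch pendant_in_branch subdividedD by (metis inj_onI)
  show "pendant ` subdivided \<inter> insert ce (nbrs G ce) = {}"
    using pendant_notin_branch pendant_in_branch nbr_in_branch root_notin_branch[OF ce_in_V]
    by (fastforce simp: nbrs_def)
qed (use verts_eq_star adj_iff_star in auto)

lemma card_S_lt_card_nbrs: "card S < card (nbrs G ce)"
proof -
  define f where "f t = (SOME a. adj G ce a \<and> branch ce a \<inter> S = {t})" for t
  have f: "adj G ce (f t) \<and> branch ce (f t) \<inter> S = {t}" if "t \<in> S" for t
    unfolding f_def using someI_ex[OF S_in_branch[OF that]] .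
  have "inj_on f S"
    by (rule inj_onI) (metis f singleton_inject)
  moreover have "f ` S \<subseteq> nbrs G ce - {z}"
    using f branch_z z_undominated by (fastforce simp: nbrs_def undominated_def)
  ultimately have "card S \<le> card (nbrs G ce - {z})"
    using finite_nbrs by (intro card_inj_on_le) auto
  thus ?thesis using adj_ce_z finite_nbrs card_Diff1_less[of "nbrs G ce" z]
    by (simp add: nbrs_def)
qed

lemma iso_subdivided_star:
  "\<exists>x S. x \<ge> 3 \<and> S \<subseteq> {1..x} \<and> card S \<le> x - 1 \<and> graph_iso G (subdivided_star x S)"
proof -
  obtain S' where S': "S' \<subseteq> {1..card (nbrs G ce)}" "card S' = card subdivided"
    "graph_iso G (subdivided_star (card (nbrs G ce)) S')"
    using star_shaped.graph_iso_subdivided_star[OF star_shaped] by blast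
  have "subdivided \<subseteq> nbrs G ce - {z}" by (auto simp: subdivided_def)
  hence "card subdivided \<le> card (nbrs G ce) - 1"
    using card_mono[OF _ \<open>subdivided \<subseteq> _\<close>] finite_nbrs adj_ce_z by (simp add: nbrs_def)
  moreover have "card (nbrs G ce) \<ge> 3" using card_S_lt_card_nbrs card_S_ge_2 by simp
  ultimately show ?thesis using S' by metis
qed

end

context min_adjacency_resolving
begin

lemma iso_subdivided_star_if_card_S_ge_2:
  assumes "card S \<ge> 2"
  shows "\<exists>x S. x \<ge> 3 \<and> S \<subseteq> {1..x} \<and> card S \<le> x - 1 \<and> graph_iso G (subdivided_star x S)"
proof -
  obtain t where "t \<in> S" using S_nonempty by blast
  then obtain c a b where cr: "critical t c a b" "c \<notin> S"
    using critical_root_notin_S[OF assms] by blast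
  interpret star_centre G S c b
    using assms cr criticalD(2)[OF cr(1)] critical_leaf[OF cr] by unfold_locales auto
  show ?thesis by (rule iso_subdivided_star)
qed

lemma iso_path_graph_if_card_S_1:
  assumes "card S = 1"
  shows "graph_iso G (path_graph 2) \<or> graph_iso G (path_graph 3)"
proof -
  obtain s where s: "S = {s}" using assms card_1_singletonE by blast
  have sV: "s \<in> V" using S_subset_V s by blast
  have inj: "u = w" if "u \<in> V" "w \<in> V" "adj_dist G u s = adj_dist G w s" for u w
    using adjacency_resolving_S that s unfolding adjacency_resolving_def by blast
  have nbr: "\<exists>u. adj G v u \<and> u \<in> V - {v}" if "v \<in> V" "v \<noteq> s" for v
    using step_towards[OF that(1) sV that(2)] adj_in_V adj_irrefl by blast
  have "card (V - {s}) = 1 \<or> card (V - {s}) = 2"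
    using card_V_le_3_if_card_S_1[OF assms] card_V_ge_2 finite_V sV by auto
  thus ?thesis
  proof
    assume "card (V - {s}) = 1"
    then obtain p where p: "V - {s} = {p}" by (rule card_1_singletonE)
    hence V: "V = {s, p}" using sV by blast
    obtain u where "adj G p u" "u \<in> V - {p}" using nbr p by blast
    hence "adj G s p" using V p adj_sym by auto
    thus ?thesis using iso_path_graph_2[OF V] by blast
  next
    assume "card (V - {s}) = 2"
    then obtain p q where pq: "V - {s} = {p, q}" "p \<noteq> q" by (auto simp: card_2_iff)
    have path: "graph_iso G (path_graph 3)"
      if hyp: "V = {s, p, q}" "p \<noteq> q" "p \<noteq> s" "q \<noteq> s" "adj G s p" "\<not> adj G s q" for p q
    proof -
      obtain u where "adj G q u" "u \<in> V - {q}" using nbr[of q] hyp by auto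
      hence "adj G p q" using hyp adj_sym by auto
      thus ?thesis using iso_path_graph_3 hyp by blast
    qed
    have "adj_dist G p s \<noteq> adj_dist G q s" using inj pq by blast
    hence "adj G s p \<and> \<not> adj G s q \<or> adj G s q \<and> \<not> adj G s p"
      using pq adj_sym unfolding adj_dist_def by (auto split: if_splits)
    moreover have "V = {s, p, q}" "V = {s, q, p}" "p \<noteq> s" "q \<noteq> s" using pq sV by auto
    ultimately show ?thesis using path pq(2) by metis
  qed
qed

end

theorem proposition5p10:
  fixes T :: "'a graph"
  assumes "tree T" and "card (verts T) \<ge> 2"
  shows "metric_dim T = broadcast_dim T \<longleftrightarrow>
    (graph_iso T (path_graph 2) \<or> graph_iso T (path_graph 3) \<or>
     (\<exists>x S. x \<ge> 3 \<and> S \<subseteq> {1..x} \<and> card S \<le> x - 1 \<and> graph_iso T (subdivided_star x S)))"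
proof -
  interpret tree_graph T by unfold_locales (rule assms(1))
  show ?thesis
  proof
    assume "metric_dim T = broadcast_dim T"
    then obtain S where S: "adjacency_resolving T S" "card S = metric_dim T"
      using adjacency_resolving_if_dims_eq by blast
    interpret min_adjacency_resolving T S
      by unfold_locales (use S metric_dim_le assms(2) in auto)
    have "card S \<noteq> 0" using S_nonempty finite_S by simp
    thus "graph_iso T (path_graph 2) \<or> graph_iso T (path_graph 3) \<or>
      (\<exists>x S. x \<ge> 3 \<and> S \<subseteq> {1..x} \<and> card S \<le> x - 1 \<and> graph_iso T (subdivided_star x S))"
      using iso_path_graph_if_card_S_1 iso_subdivided_star_if_card_S_ge_2
      by (cases "card S = 1") auto
  next
    assume "graph_iso T (path_graph 2) \<or> graph_iso T (path_graph 3) \<or>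
      (\<exists>x S. x \<ge> 3 \<and> S \<subseteq> {1..x} \<and> card S \<le> x - 1 \<and> graph_iso T (subdivided_star x S))"
    thus "metric_dim T = broadcast_dim T"
      using dims_eq_path_graph dims_eq_subdivided_star by blast
  qed
qed

end
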